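(* Let $\{X_t\}_{t\in\mathbb Z}$ be i.i.d. real-valued random variables with distribution function $F$ which is twice differentiable with density $f=F'$ satisfying $$\sup_{x\in\mathbb R}\big(f(x)+|f'(x)|\big)<\infty\quad\text{and}\quad \mathbb P(|X_1|>x)\le Cx^{-\lambda}\ \text{for all } x>0$$ for some constant $C>0$ and fixed $\lambda>18/5$. Let $\beta\in(0,1)$ be fixed and assume $f(q_\beta)>0$, where $q_\beta=F^-(\beta)$. Then, as $n\to\infty$, $$\frac1{\sqrt n}\max_{1\le i<j\le n}(j-i+1)\Big|[\hat q_\beta]_i^j-q_\beta-\frac{\beta-\hat F_i^j(q_\beta)}{f(q_\beta)}\Big|=o_{\mathbb P}(1).$$
   Context: For a distribution function $G$, $G^-(\beta)=\inf\{x\in\mathbb R: G(x)\ge\beta\}$. $\hat F_i^j(z)=\frac1{j-i+1}\sum_{t=i}^jI\{X_t\le z\}$ is the empirical distribution function of $X_i,\dots,X_j$ and $[\hat q_\beta]_i^j=(\hat F_i^j)^-(\beta)$ the corresponding empirical $\beta$-quantile. *)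

theory Defs
  imports "HOL-Probability.Probability"
begin

definition gen_inv :: "(real \<Rightarrow> real) \<Rightarrow> real \<Rightarrow> real" where
  "gen_inv G \<beta> = Inf {x. G x \<ge> \<beta>}"

definition emp_cdf :: "(nat \<Rightarrow> 'a \<Rightarrow> real) \<Rightarrow> nat \<Rightarrow> nat \<Rightarrow> 'a \<Rightarrow> real \<Rightarrow> real" where
  "emp_cdf X i j \<omega> z =
     (\<Sum>t=i..j. (if X t \<omega> \<le> z then 1 else 0)) / real (j - i + 1)"

definition emp_quantile :: "(nat \<Rightarrow> 'a \<Rightarrow> real) \<Rightarrow> real \<Rightarrow> nat \<Rightarrow> nat \<Rightarrow> 'a \<Rightarrow> real" where
  "emp_quantile X \<beta> i j \<omega> = gen_inv (emp_cdf X i j \<omega>) \<beta>"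

definition bahadur_stat ::
  "(nat \<Rightarrow> 'a \<Rightarrow> real) \<Rightarrow> real \<Rightarrow> real \<Rightarrow> real \<Rightarrow> nat \<Rightarrow> 'a \<Rightarrow> real" where
  "bahadur_stat X \<beta> q fq n \<omega> =
     (1 / sqrt (real n)) *
     Max {real (j - i + 1) *
            \<bar>emp_quantile X \<beta> i j \<omega> - q - (\<beta> - emp_cdf X i j \<omega> q) / fq\<bar>
          | i j. 1 \<le> i \<and> i < j \<and> j \<le> n}"

end

theory Submission
  imports Defs "HOL-Real_Asymp.Real_Asymp"
begin

(* Fix \<epsilon> > 0 and put r = n^(1/20). A window [i, j] of length m \<le> r^4 is handled crudely on the
   event that all |X_t| \<le> n^(5/18), whose complement has probability O(n^(1 - 5\<lambda>/18)) = o(1)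
   since \<lambda> > 18/5. For a longer window let a = (\<beta> - F_ij(q)) / f(q) and \<delta> = \<epsilon> \<surd>n / m.
   Because F_ij is monotone and F is linear near q up to a quadratic error, the empirical
   quantile lies in [q + a - \<delta>, q + a + \<delta>] as soon as F_ij - F is uniformly close to
   F_ij(q) - F(q) on a grid of mesh \<delta>/4 around q (or, for coarse meshes, as soon as F_ij
   crosses \<beta> between q - \<eta> and q + \<eta>). Chernoff bounds that use the small probability of
   each grid increment make all these exceptional events exp(-n^c) small, which survives the
   union bound over O(n^2) windows and O(r/\<epsilon>) grid points. *)

lemma exp_le_quadratic:
  fixes s :: real
  assumes "\<bar>s\<bar> \<le> 1"
  shows "exp s \<le> 1 + s + s\<^sup>2"
proof (cases "s \<ge> 0")
  case True
  thus ?thesis using exp_bound[of s] assms by auto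
next
  case False
  define u where "u = -s"
  have u: "0 < u" "u \<le> 1" using False assms by (auto simp: u_def)
  have "exp (-u) = 1 / exp u" by (simp add: exp_minus field_simps)
  also have "\<dots> \<le> 1 / (1 + u)"
    using u exp_ge_add_one_self[of u] by (intro divide_left_mono) auto
  also have "\<dots> \<le> 1 - u + u\<^sup>2"
  proof -
    have "(1 + u) * (1 - u + u\<^sup>2) = 1 + u ^ 3"
      by (simp add: algebra_simps power2_eq_square power3_eq_cube)
    hence "1 \<le> (1 + u) * (1 - u + u\<^sup>2)" using u by simp
    thus ?thesis using u by (simp add: field_simps)
  qed
  finally show ?thesis by (simp add: u_def)
qed

lemma centred_bernoulli_mgf_le:
  fixes s p :: real
  assumes "\<bar>s\<bar> \<le> 1" "0 \<le> p"
  shows "exp (- s * p) * (1 + p * (exp s - 1)) \<le> exp (p * s\<^sup>2)"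
proof -
  have "exp (- s * p) * (1 + p * (exp s - 1)) \<le> exp (- s * p) * exp (p * (exp s - 1))"
    using exp_ge_add_one_self[of "p * (exp s - 1)"] by simp
  also have "\<dots> = exp (p * (exp s - 1 - s))" by (simp add: mult_exp_exp algebra_simps)
  also have "\<dots> \<le> exp (p * s\<^sup>2)"
    using exp_le_quadratic[OF assms(1)] assms(2) by (intro exp_mono mult_left_mono) auto
  finally show ?thesis .
qed

context prob_space
begin

lemma nn_integral_exp_centred_indicator:
  assumes Y: "random_variable borel Y" and A: "A \<in> sets borel"
    and p: "prob {\<omega>\<in>space M. Y \<omega> \<in> A} = p"
  shows "(\<integral>\<^sup>+\<omega>. ennreal (exp (s * (indicator A (Y \<omega>) - p))) \<partial>M)
    = ennreal (exp (- s * p) * (1 + p * (exp s - 1)))"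
proof -
  define E where "E = {\<omega>\<in>space M. Y \<omega> \<in> A}"
  have E: "E \<in> events" unfolding E_def using Y A by measurable
  have "exp (s * (indicator A (Y \<omega>) - p)) = exp (- s * p) * (1 + (exp s - 1) * indicator E \<omega>)"
    if "\<omega> \<in> space M" for \<omega>
    using that by (auto simp: E_def indicator_def mult_exp_exp algebra_simps)
  hence "(\<integral>\<^sup>+\<omega>. ennreal (exp (s * (indicator A (Y \<omega>) - p))) \<partial>M)
      = (\<integral>\<^sup>+\<omega>. ennreal (exp (- s * p) * (1 + (exp s - 1) * indicator E \<omega>)) \<partial>M)"
    by (intro nn_integral_cong) simp
  also have "\<dots> = ennreal (expectation (\<lambda>\<omega>. exp (- s * p) * (1 + (exp s - 1) * indicator E \<omega>)))"
  proof (rule nn_integral_eq_integral)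
    show "integrable M (\<lambda>\<omega>. exp (- s * p) * (1 + (exp s - 1) * indicator E \<omega>))"
      using E by (intro integrable_mult_right Bochner_Integration.integrable_add integrable_const
          integrable_real_indicator) (auto simp: emeasure_eq_measure)
    show "AE \<omega> in M. 0 \<le> exp (- s * p) * (1 + (exp s - 1) * indicator E \<omega>)"
      by (auto simp: indicator_def)
  qed
  also have "\<dots> = ennreal (exp (- s * p) * (1 + p * (exp s - 1)))"
  proof -
    have "integrable M (indicator E :: 'a \<Rightarrow> real)"
      using E by (simp add: emeasure_eq_measure)
    thus ?thesis
      using E p by (simp add: E_def[symmetric] Bochner_Integration.integral_add prob_space
          emeasure_eq_measure mult.commute)
  qed
  finally show ?thesis .
qed

lemma nn_integral_exp_centred_count_le:
  fixes X :: "nat \<Rightarrow> 'a \<Rightarrow> real"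
  assumes indep: "indep_vars (\<lambda>_. borel) X UNIV" and A: "A \<in> sets borel"
    and p: "\<And>t. prob {\<omega>\<in>space M. X t \<omega> \<in> A} = p"
    and fin: "finite I" and s: "\<bar>s\<bar> \<le> 1"
  shows "(\<integral>\<^sup>+\<omega>. ennreal (exp (s * ((\<Sum>t\<in>I. indicator A (X t \<omega>)) - real (card I) * p))) \<partial>M)
         \<le> ennreal (exp (real (card I) * p * s\<^sup>2))"
proof -
  have rv: "random_variable borel (X t)" for t using indep unfolding indep_vars_def by blast
  have p0: "0 \<le> p" using p[of 0] by auto
  have "(\<integral>\<^sup>+\<omega>. ennreal (exp (s * ((\<Sum>t\<in>I. indicator A (X t \<omega>)) - real (card I) * p))) \<partial>M)
      = (\<integral>\<^sup>+\<omega>. (\<Prod>t\<in>I. ennreal (exp (s * (indicator A (X t \<omega>) - p)))) \<partial>M)"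
  proof (intro nn_integral_cong)
    fix \<omega>
    have "s * ((\<Sum>t\<in>I. indicator A (X t \<omega>)) - real (card I) * p) = (\<Sum>t\<in>I. s * (indicator A (X t \<omega>) - p))"
      by (simp only: sum_distrib_left[symmetric] sum_subtractf sum_constant)
    thus "ennreal (exp (s * ((\<Sum>t\<in>I. indicator A (X t \<omega>)) - real (card I) * p)))
        = (\<Prod>t\<in>I. ennreal (exp (s * (indicator A (X t \<omega>) - p))))"
      by (simp add: exp_sum fin prod_ennreal)
  qed
  also have "\<dots> = (\<Prod>t\<in>I. \<integral>\<^sup>+\<omega>. ennreal (exp (s * (indicator A (X t \<omega>) - p))) \<partial>M)"
    by (intro indep_vars_nn_integral fin indep_vars_compose2[OF indep_vars_subset[OF indep]])
      (use A in auto)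
  also have "\<dots> \<le> (\<Prod>t\<in>I. ennreal (exp (p * s\<^sup>2)))"
    using centred_bernoulli_mgf_le[OF s p0]
    by (intro prod_mono_ennreal) (simp add: nn_integral_exp_centred_indicator[OF rv A p])
  also have "\<dots> = ennreal (exp (p * s\<^sup>2) ^ card I)"
    by (simp add: ennreal_power)
  also have "exp (p * s\<^sup>2) ^ card I = exp (real (card I) * p * s\<^sup>2)"
    by (simp add: exp_of_nat_mult[symmetric] mult_ac)
  finally show ?thesis .
qed

lemma prob_ge_le_of_nn_integral_exp:
  fixes Z :: "'a \<Rightarrow> real"
  assumes Z: "Z \<in> borel_measurable M" and s: "0 < s" and K: "0 \<le> K"
    and mgf: "(\<integral>\<^sup>+\<omega>. ennreal (exp (s * Z \<omega>)) \<partial>M) \<le> ennreal K"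
  shows "prob {\<omega>\<in>space M. c \<le> Z \<omega>} \<le> exp (- s * c) * K"
proof -
  have "emeasure M {\<omega>\<in>space M. c \<le> Z \<omega>}
      \<le> ennreal (exp (- s * c)) * (\<integral>\<^sup>+\<omega>. ennreal (exp (s * Z \<omega>)) * indicator (space M) \<omega> \<partial>M)"
    by (rule Chernoff_ineq_nn_integral_ge[OF s]) (use Z in auto)
  also have "(\<integral>\<^sup>+\<omega>. ennreal (exp (s * Z \<omega>)) * indicator (space M) \<omega> \<partial>M)
      = (\<integral>\<^sup>+\<omega>. ennreal (exp (s * Z \<omega>)) \<partial>M)"
    by (intro nn_integral_cong) auto
  also have "ennreal (exp (- s * c)) * \<dots> \<le> ennreal (exp (- s * c)) * ennreal K"
    by (intro mult_left_mono mgf) auto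
  finally show ?thesis
    using K by (simp add: emeasure_eq_measure ennreal_mult'[symmetric] ennreal_le_iff)
qed

lemma prob_centred_count_ge_le:
  fixes X :: "nat \<Rightarrow> 'a \<Rightarrow> real"
  assumes indep: "indep_vars (\<lambda>_. borel) X UNIV" and A: "A \<in> sets borel"
    and p: "\<And>t. prob {\<omega>\<in>space M. X t \<omega> \<in> A} = p"
    and fin: "finite I" and s: "0 < s" "s \<le> 1"
  shows "prob {\<omega>\<in>space M. c \<le> (\<Sum>t\<in>I. indicator A (X t \<omega>)) - real (card I) * p}
         \<le> exp (real (card I) * p * s\<^sup>2 - s * c)"
proof -
  have [measurable]: "random_variable borel (X t)" for t
    using indep unfolding indep_vars_def by blast
  have "prob {\<omega>\<in>space M. c \<le> (\<Sum>t\<in>I. indicator A (X t \<omega>)) - real (card I) * p}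
      \<le> exp (- s * c) * exp (real (card I) * p * s\<^sup>2)"
    by (rule prob_ge_le_of_nn_integral_exp[OF _ s(1) _ nn_integral_exp_centred_count_le[OF indep A p fin]])
      (use s A in auto)
  thus ?thesis by (simp add: mult_exp_exp algebra_simps)
qed

lemma prob_centred_count_le_le:
  fixes X :: "nat \<Rightarrow> 'a \<Rightarrow> real"
  assumes indep: "indep_vars (\<lambda>_. borel) X UNIV" and A: "A \<in> sets borel"
    and p: "\<And>t. prob {\<omega>\<in>space M. X t \<omega> \<in> A} = p"
    and fin: "finite I" and s: "0 < s" "s \<le> 1"
  shows "prob {\<omega>\<in>space M. (\<Sum>t\<in>I. indicator A (X t \<omega>)) - real (card I) * p \<le> - c}
         \<le> exp (real (card I) * p * s\<^sup>2 - s * c)"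
proof -
  have [measurable]: "random_variable borel (X t)" for t
    using indep unfolding indep_vars_def by blast
  have mgf: "(\<integral>\<^sup>+\<omega>. ennreal (exp (s * - ((\<Sum>t\<in>I. indicator A (X t \<omega>)) - real (card I) * p))) \<partial>M)
      \<le> ennreal (exp (real (card I) * p * (- s)\<^sup>2))"
    using nn_integral_exp_centred_count_le[OF indep A p fin, of "- s"] s by (simp add: algebra_simps)
  have "prob {\<omega>\<in>space M. c \<le> - ((\<Sum>t\<in>I. indicator A (X t \<omega>)) - real (card I) * p)}
      \<le> exp (- s * c) * exp (real (card I) * p * (- s)\<^sup>2)"
    by (rule prob_ge_le_of_nn_integral_exp[OF _ s(1) _ mgf]) (use s A in auto)
  moreover have "{\<omega>\<in>space M. c \<le> - ((\<Sum>t\<in>I. indicator A (X t \<omega>)) - real (card I) * p)}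
      = {\<omega>\<in>space M. (\<Sum>t\<in>I. indicator A (X t \<omega>)) - real (card I) * p \<le> - c}" by auto
  ultimately show ?thesis by (simp add: mult_exp_exp algebra_simps)
qed

lemma prob_abs_centred_count_ge_le:
  fixes X :: "nat \<Rightarrow> 'a \<Rightarrow> real"
  assumes indep: "indep_vars (\<lambda>_. borel) X UNIV" and A: "A \<in> sets borel"
    and p: "\<And>t. prob {\<omega>\<in>space M. X t \<omega> \<in> A} = p"
    and fin: "finite I" and s: "0 < s" "s \<le> 1"
  shows "prob {\<omega>\<in>space M. c \<le> \<bar>(\<Sum>t\<in>I. indicator A (X t \<omega>)) - real (card I) * p\<bar>}
         \<le> 2 * exp (real (card I) * p * s\<^sup>2 - s * c)"
proof -
  have [measurable]: "random_variable borel (X t)" for t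
    using indep unfolding indep_vars_def by blast
  have [measurable]: "A \<in> sets borel" by (fact A)
  have "prob {\<omega>\<in>space M. c \<le> \<bar>(\<Sum>t\<in>I. indicator A (X t \<omega>)) - real (card I) * p\<bar>}
      = prob ({\<omega>\<in>space M. c \<le> (\<Sum>t\<in>I. indicator A (X t \<omega>)) - real (card I) * p}
          \<union> {\<omega>\<in>space M. (\<Sum>t\<in>I. indicator A (X t \<omega>)) - real (card I) * p \<le> - c})"
    by (rule arg_cong[where f = prob]) auto
  also have "\<dots> \<le> prob {\<omega>\<in>space M. c \<le> (\<Sum>t\<in>I. indicator A (X t \<omega>)) - real (card I) * p}
      + prob {\<omega>\<in>space M. (\<Sum>t\<in>I. indicator A (X t \<omega>)) - real (card I) * p \<le> - c}"
    by (rule measure_Un_le) measurable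
  also have "\<dots> \<le> exp (real (card I) * p * s\<^sup>2 - s * c) + exp (real (card I) * p * s\<^sup>2 - s * c)"
    by (intro add_mono prob_centred_count_ge_le[OF indep A p fin s]
        prob_centred_count_le_le[OF indep A p fin s])
  finally show ?thesis by simp
qed

lemma prob_UN_le_card_mult:
  assumes "finite I" "\<And>i. i \<in> I \<Longrightarrow> A i \<in> events" "\<And>i. i \<in> I \<Longrightarrow> prob (A i) \<le> b"
  shows "prob (\<Union>i\<in>I. A i) \<le> real (card I) * b"
proof -
  have "prob (\<Union>i\<in>I. A i) \<le> (\<Sum>i\<in>I. prob (A i))"
    by (rule measure_UNION_le) (use assms in auto)
  also have "\<dots> \<le> (\<Sum>i\<in>I. b)" by (rule sum_mono) (use assms in auto)
  finally show ?thesis by simp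
qed

lemma cdf_distr_eq:
  assumes "random_variable borel Y" and "\<And>x. prob {\<omega>\<in>space M. Y \<omega> \<le> x} = F x"
  shows "F = cdf (distr M borel Y)"
proof
  fix x
  have "cdf (distr M borel Y) x = prob (Y -` {..x} \<inter> space M)"
    using assms(1) by (simp add: cdf_def measure_distr)
  also have "Y -` {..x} \<inter> space M = {\<omega>\<in>space M. Y \<omega> \<le> x}" by auto
  finally show "F x = cdf (distr M borel Y) x" using assms(2) by simp
qed

end

lemma deriv_nonneg_if_mono:
  fixes F f :: "real \<Rightarrow> real"
  assumes mono: "mono F" and d: "(F has_real_derivative f x) (at x)"
  shows "0 \<le> f x"
proof (rule ccontr)
  assume "\<not> 0 \<le> f x"
  then obtain d where "d > 0" "\<forall>h>0. h < d \<longrightarrow> F x > F (x + h)"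
    using DERIV_neg_dec_right[OF d] by force
  hence "F x > F (x + d / 2)" by simp
  moreover have "F x \<le> F (x + d / 2)" using mono \<open>d > 0\<close> by (simp add: monoD)
  ultimately show False by simp
qed

lemma lipschitz_of_deriv_bound:
  fixes g g' :: "real \<Rightarrow> real"
  assumes "\<And>x. (g has_real_derivative g' x) (at x)" and "\<And>x. \<bar>g' x\<bar> \<le> L"
  shows "\<bar>g y - g x\<bar> \<le> L * \<bar>y - x\<bar>"
  using field_differentiable_bound[of UNIV g g' L y x] assms
  by (auto intro: has_field_derivative_at_within)

lemma taylor_first_order_le:
  fixes F f f' :: "real \<Rightarrow> real"
  assumes dF: "\<And>x. (F has_real_derivative f x) (at x)"
    and df: "\<And>x. (f has_real_derivative f' x) (at x)"
    and bound: "\<And>x. \<bar>f' x\<bar> \<le> L"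
  shows "\<bar>F (q + x) - F q - f q * x\<bar> \<le> L * x\<^sup>2"
proof -
  define g where "g u = F (q + u) - f q * u" for u
  define S where "S = {-\<bar>x\<bar>..\<bar>x\<bar>}"
  have g': "(g has_field_derivative (f (q + u) - f q)) (at u within S)" for u
  proof -
    have "((+) q has_real_derivative 1) (at u)" by (auto intro!: derivative_eq_intros)
    from DERIV_chain2[OF dF this]
    have "((\<lambda>u. F (q + u)) has_real_derivative f (q + u)) (at u)" by simp
    hence "(g has_real_derivative (f (q + u) - f q * 1)) (at u)"
      unfolding g_def by (intro derivative_intros) (auto intro!: derivative_eq_intros)
    thus ?thesis by (auto intro: has_field_derivative_at_within)
  qed
  have "\<bar>f (q + u) - f q\<bar> \<le> L * \<bar>x\<bar>" if "u \<in> S" for u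
  proof -
    have "0 \<le> L" using bound[of 0] by linarith
    hence "L * \<bar>(q + u) - q\<bar> \<le> L * \<bar>x\<bar>" using that by (auto simp: S_def intro!: mult_left_mono)
    thus ?thesis using lipschitz_of_deriv_bound[OF df bound, of "q + u" q] by linarith
  qed
  hence "norm (g x - g 0) \<le> L * \<bar>x\<bar> * norm (x - 0)"
    using g' by (intro field_differentiable_bound[of S g]) (auto simp: S_def)
  thus ?thesis by (simp add: g_def power2_eq_square abs_mult mult_ac)
qed

lemma gen_inv_eq_of_continuous:
  fixes F :: "real \<Rightarrow> real"
  assumes cont: "continuous_on UNIV F"
    and top: "(F \<longlongrightarrow> 1) at_top" and bot: "(F \<longlongrightarrow> 0) at_bot"
    and \<beta>: "0 < \<beta>" "\<beta> < 1"
  shows "F (gen_inv F \<beta>) = \<beta>"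
proof -
  define S where "S = {x. \<beta> \<le> F x}"
  have closed: "closed S" unfolding S_def
    by (rule closed_Collect_le) (use cont in \<open>auto intro: continuous_intros\<close>)
  have "\<forall>\<^sub>F x in at_top. \<beta> < F x" by (rule order_tendstoD(1)[OF top \<beta>(2)])
  then obtain x where "\<beta> < F x" by (auto simp: eventually_at_top_linorder)
  hence nonempty: "S \<noteq> {}" unfolding S_def by (blast intro: less_imp_le)
  obtain N where N: "\<And>x. x \<le> N \<Longrightarrow> F x < \<beta>"
    using order_tendstoD(2)[OF bot \<beta>(1)] by (auto simp: eventually_at_bot_linorder)
  have "N \<le> x" if "x \<in> S" for x
    using that N[of x] by (cases "x \<le> N") (auto simp: S_def)
  hence bdd: "bdd_below S" by (rule bdd_belowI)
  have "Inf S \<in> S" by (rule closed_contains_Inf[OF nonempty bdd closed])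
  hence ge: "\<beta> \<le> F (Inf S)" by (simp add: S_def)
  have "F x < \<beta>" if "x < Inf S" for x
    using cInf_lower[OF _ bdd, of x] that by (force simp: S_def)
  hence below: "\<forall>\<^sub>F x in at_left (Inf S). F x \<le> \<beta>"
    using eventually_at_left_real[of "Inf S - 1" "Inf S"]
    by (auto elim!: eventually_mono intro: less_imp_le)
  have "(F \<longlongrightarrow> F (Inf S)) (at_left (Inf S))"
    using cont by (meson UNIV_I continuous_on_def tendsto_within_subset subset_UNIV)
  hence "F (Inf S) \<le> \<beta>"
    using below trivial_limit_at_left_real by (rule tendsto_upperbound)
  thus ?thesis using ge by (simp add: gen_inv_def S_def[symmetric])
qed

lemma (in prob_space) cdf_gen_inv_eq:
  assumes "random_variable borel Y" and "\<And>x. prob {\<omega>\<in>space M. Y \<omega> \<le> x} = F x"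
    and "continuous_on UNIV F" and "0 < \<beta>" "\<beta> < 1"
  shows "F (gen_inv F \<beta>) = \<beta>"
proof -
  have D: "real_distribution (distr M borel Y)" using assms(1) by simp
  have F: "F = cdf (distr M borel Y)" by (rule cdf_distr_eq[OF assms(1,2)])
  show ?thesis
  proof (rule gen_inv_eq_of_continuous[OF assms(3) _ _ assms(4,5)])
    show "(F \<longlongrightarrow> 1) at_top"
      unfolding F by (rule real_distribution.cdf_lim_at_top_prob[OF D])
    show "(F \<longlongrightarrow> 0) at_bot"
      unfolding F by (rule finite_borel_measure.cdf_lim_at_bot[OF real_distribution.finite_borel_measure_M[OF D]])
  qed
qed

lemma emp_cdf_mono: "z \<le> z' \<Longrightarrow> emp_cdf X i j \<omega> z \<le> emp_cdf X i j \<omega> z'"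
  unfolding emp_cdf_def by (intro divide_right_mono sum_mono) auto

lemma emp_cdf_nonneg: "0 \<le> emp_cdf X i j \<omega> z"
  unfolding emp_cdf_def by (intro divide_nonneg_nonneg sum_nonneg) auto

lemma emp_cdf_le_1:
  assumes "i \<le> j"
  shows "emp_cdf X i j \<omega> z \<le> 1"
proof -
  have "(\<Sum>t=i..j. (if X t \<omega> \<le> z then 1 else 0 :: real)) \<le> (\<Sum>t=i..j. 1)"
    by (intro sum_mono) auto
  thus ?thesis using assms unfolding emp_cdf_def by (simp add: Suc_diff_le)
qed

lemma emp_cdf_eq_1:
  assumes "i \<le> j" and "\<And>t. t \<in> {i..j} \<Longrightarrow> X t \<omega> \<le> z"
  shows "emp_cdf X i j \<omega> z = 1"
proof -
  have "(\<Sum>t=i..j. (if X t \<omega> \<le> z then 1 else 0 :: real)) = (\<Sum>t=i..j. 1)"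
    using assms(2) by (intro sum.cong) auto
  thus ?thesis using assms(1) unfolding emp_cdf_def by (simp add: Suc_diff_le)
qed

lemma emp_cdf_eq_0:
  assumes "\<And>t. t \<in> {i..j} \<Longrightarrow> z < X t \<omega>"
  shows "emp_cdf X i j \<omega> z = 0"
proof -
  have "(\<Sum>t=i..j. (if X t \<omega> \<le> z then 1 else 0 :: real)) = (\<Sum>t=i..j. 0)"
    using assms by (intro sum.cong) (auto simp: not_le[symmetric])
  thus ?thesis unfolding emp_cdf_def by simp
qed

lemma emp_cdf_superlevel_nonempty:
  assumes "i \<le> j" "\<beta> \<le> 1"
  shows "{x. \<beta> \<le> emp_cdf X i j \<omega> x} \<noteq> {}"
proof -
  have "emp_cdf X i j \<omega> (Max ((\<lambda>t. X t \<omega>) ` {i..j})) = 1"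
    by (rule emp_cdf_eq_1) (use assms in auto)
  hence "Max ((\<lambda>t. X t \<omega>) ` {i..j}) \<in> {x. \<beta> \<le> emp_cdf X i j \<omega> x}" using assms(2) by simp
  thus ?thesis by blast
qed

lemma bdd_below_emp_cdf_superlevel:
  assumes "0 < \<beta>"
  shows "bdd_below {x. \<beta> \<le> emp_cdf X i j \<omega> x}"
proof (rule bdd_belowI)
  fix x assume "x \<in> {x. \<beta> \<le> emp_cdf X i j \<omega> x}"
  hence "emp_cdf X i j \<omega> x \<noteq> 0" using assms by auto
  thus "Min ((\<lambda>t. X t \<omega>) ` {i..j}) \<le> x"
    using emp_cdf_eq_0[of i j x X \<omega>] by (force intro: Min_le_iff[THEN iffD2])
qed

lemma emp_quantile_le:
  assumes "i \<le> j" "0 < \<beta>" "\<beta> \<le> emp_cdf X i j \<omega> z"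
  shows "emp_quantile X \<beta> i j \<omega> \<le> z"
  unfolding emp_quantile_def gen_inv_def
  by (rule cInf_lower) (use assms bdd_below_emp_cdf_superlevel in auto)

lemma le_emp_quantile:
  assumes "i \<le> j" "\<beta> \<le> 1" "emp_cdf X i j \<omega> z < \<beta>"
  shows "z \<le> emp_quantile X \<beta> i j \<omega>"
  unfolding emp_quantile_def gen_inv_def
proof (rule cInf_greatest)
  show "{x. \<beta> \<le> emp_cdf X i j \<omega> x} \<noteq> {}"
    by (rule emp_cdf_superlevel_nonempty[OF assms(1,2)])
  fix x assume "x \<in> {x. \<beta> \<le> emp_cdf X i j \<omega> x}"
  thus "z \<le> x" using assms(3) emp_cdf_mono[of x z X i j \<omega>] by force
qed

lemma abs_bahadur_stat_le:
  assumes n: "2 \<le> n" and c: "0 \<le> c"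
    and windows: "\<And>i j. 1 \<le> i \<Longrightarrow> i < j \<Longrightarrow> j \<le> n \<Longrightarrow>
      real (j - i + 1) * \<bar>emp_quantile X \<beta> i j \<omega> - q - (\<beta> - emp_cdf X i j \<omega> q) / fq\<bar> \<le> c * sqrt n"
  shows "\<bar>bahadur_stat X \<beta> q fq n \<omega>\<bar> \<le> c"
proof -
  define g where "g = (\<lambda>(i, j). real (j - i + 1) *
      \<bar>emp_quantile X \<beta> i j \<omega> - q - (\<beta> - emp_cdf X i j \<omega> q) / fq\<bar>)"
  define V where "V = {real (j - i + 1) * \<bar>emp_quantile X \<beta> i j \<omega> - q - (\<beta> - emp_cdf X i j \<omega> q) / fq\<bar>
      | i j. 1 \<le> i \<and> i < j \<and> j \<le> n}"
  have "V \<subseteq> g ` ({1..n} \<times> {1..n})"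
  proof
    fix v assume "v \<in> V"
    then obtain i j where "v = g (i, j)" "1 \<le> i" "i < j" "j \<le> n" by (auto simp: V_def g_def)
    thus "v \<in> g ` ({1..n} \<times> {1..n})" by force
  qed
  hence fin: "finite V" by (rule finite_subset) simp
  have ne: "g (1, 2) \<in> V"
    unfolding V_def mem_Collect_eq using n by (intro exI[of _ "1::nat"] exI[of _ "2::nat"]) (simp add: g_def)
  have bound: "0 \<le> v \<and> v \<le> c * sqrt n" if v: "v \<in> V" for v
  proof -
    obtain i j where "v = real (j - i + 1) * \<bar>emp_quantile X \<beta> i j \<omega> - q - (\<beta> - emp_cdf X i j \<omega> q) / fq\<bar>"
      "1 \<le> i" "i < j" "j \<le> n"
      using v unfolding V_def by blast
    thus ?thesis using windows[of i j] by simp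
  qed
  have stat: "bahadur_stat X \<beta> q fq n \<omega> = Max V / sqrt n" by (simp add: bahadur_stat_def V_def)
  have "0 \<le> Max V" using bound[OF ne] Max_ge[OF fin ne] by linarith
  moreover have "Max V \<le> c * sqrt n" using fin ne bound by (subst Max_le_iff) auto
  moreover have "0 < sqrt (real n)" using n by simp
  ultimately show ?thesis unfolding stat by (simp add: field_simps)
qed

lemma int_abs_le_subset: "{k::int. \<bar>real_of_int k\<bar> \<le> K} \<subseteq> {-\<lfloor>K\<rfloor>..\<lfloor>K\<rfloor>}"
  by (auto simp: abs_le_iff le_floor_iff minus_le_iff)

lemma finite_int_abs_le: "finite {k::int. \<bar>real_of_int k\<bar> \<le> K}"
  by (rule finite_subset[OF int_abs_le_subset]) simp

lemma card_int_abs_le: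
  fixes K :: real
  assumes "0 \<le> K"
  shows "real (card {k::int. \<bar>real_of_int k\<bar> \<le> K}) \<le> 2 * K + 1"
proof -
  have "card {k::int. \<bar>real_of_int k\<bar> \<le> K} \<le> card {-\<lfloor>K\<rfloor>..\<lfloor>K\<rfloor>}"
    by (intro card_mono int_abs_le_subset) simp
  also have "card {-\<lfloor>K\<rfloor>..\<lfloor>K\<rfloor>} = nat (2 * \<lfloor>K\<rfloor> + 1)" by simp
  finally have "real (card {k::int. \<bar>real_of_int k\<bar> \<le> K}) \<le> real (nat (2 * \<lfloor>K\<rfloor> + 1))"
    by linarith
  also have "\<dots> = 2 * real_of_int \<lfloor>K\<rfloor> + 1" using assms by simp
  finally show ?thesis by linarith
qed

lemma grid_point_near:
  fixes G H :: "real \<Rightarrow> real"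
  assumes taylor: "\<And>x. \<bar>H x - c * x\<bar> \<le> B * x\<^sup>2" and B: "0 \<le> B" and \<delta>: "0 < \<delta>"
    and grid: "\<And>k::int. \<bar>real_of_int k\<bar> \<le> K \<Longrightarrow>
      \<bar>G (real_of_int k * (\<delta> / 4)) - H (real_of_int k * (\<delta> / 4))\<bar> < e"
    and K: "4 * \<bar>a\<bar> / \<delta> + 5 \<le> K"
    and close: "\<bar>real_of_int k * (\<delta> / 4) - a\<bar> \<le> \<delta> + \<delta> / 4"
  shows "\<bar>G (real_of_int k * (\<delta> / 4)) - c * (real_of_int k * (\<delta> / 4))\<bar> < B * (\<bar>a\<bar> + 2 * \<delta>)\<^sup>2 + e"
proof -
  define x where "x = real_of_int k * (\<delta> / 4)"
  have x: "\<bar>x\<bar> \<le> \<bar>a\<bar> + \<delta> + \<delta> / 4"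
    using close abs_triangle_ineq[of "x - a" a] by (simp add: x_def)
  hence "\<bar>real_of_int k\<bar> * (\<delta> / 4) \<le> \<bar>a\<bar> + \<delta> + \<delta> / 4" using \<delta> by (simp add: x_def abs_mult)
  hence "\<bar>real_of_int k\<bar> \<le> 4 * \<bar>a\<bar> / \<delta> + 5" using \<delta> by (simp add: field_simps)
  hence "\<bar>G x - H x\<bar> < e" using grid[of k] K unfolding x_def by linarith
  moreover have "B * x\<^sup>2 \<le> B * (\<bar>a\<bar> + 2 * \<delta>)\<^sup>2"
  proof -
    have "\<bar>x\<bar>\<^sup>2 \<le> (\<bar>a\<bar> + 2 * \<delta>)\<^sup>2" using x \<delta> by (intro power_mono) auto
    thus ?thesis using B by (simp add: mult_left_mono)
  qed
  ultimately show ?thesis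
    using taylor[of x] unfolding x_def[symmetric] abs_less_iff abs_le_iff by linarith
qed

lemma mono_grid_bracket:
  fixes G H :: "real \<Rightarrow> real"
  assumes mono: "mono G"
    and taylor: "\<And>x. \<bar>H x - c * x\<bar> \<le> B * x\<^sup>2"
    and c: "0 < c" and B: "0 \<le> B" and \<delta>: "0 < \<delta>"
    and grid: "\<And>k::int. \<bar>real_of_int k\<bar> \<le> K \<Longrightarrow>
      \<bar>G (real_of_int k * (\<delta> / 4)) - H (real_of_int k * (\<delta> / 4))\<bar> < e"
    and K: "4 * \<bar>a\<bar> / \<delta> + 5 \<le> K"
    and small: "B * (\<bar>a\<bar> + 2 * \<delta>)\<^sup>2 + e \<le> 3 * c * \<delta> / 4"
  shows "c * a \<le> G (a + \<delta>)" and "G (a - \<delta>) < c * a"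
proof -
  define h where "h = \<delta> / 4"
  have h: "0 < h" "\<delta> = 4 * h" using \<delta> by (simp_all add: h_def)
  define R where "R = B * (\<bar>a\<bar> + 2 * \<delta>)\<^sup>2 + e"
  have near: "\<bar>G (real_of_int k * h) - c * (real_of_int k * h)\<bar> < R"
    if "\<bar>real_of_int k * h - a\<bar> \<le> \<delta> + h" for k :: int
    using grid_point_near[OF taylor B \<delta> grid K] that by (simp add: R_def h_def)
  define k where "k = \<lfloor>(a + \<delta>) / h\<rfloor>"
  have k: "real_of_int k * h \<le> a + \<delta>" "a + \<delta> < real_of_int k * h + h"
    using floor_divide_lower[OF h(1), of "a + \<delta>"] floor_divide_upper[OF h(1), of "a + \<delta>"]
    by (simp_all add: k_def algebra_simps)
  have "c * (a + 3 * \<delta> / 4) - R \<le> c * (real_of_int k * h) - R"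
    using k c h by (intro diff_right_mono mult_left_mono) auto
  also have "\<dots> < G (real_of_int k * h)" using near[of k] k h by (simp add: abs_le_iff abs_less_iff)
  also have "\<dots> \<le> G (a + \<delta>)" using mono k by (simp add: monoD)
  finally show "c * a \<le> G (a + \<delta>)" using small by (simp add: R_def algebra_simps)
  define l where "l = \<lceil>(a - \<delta>) / h\<rceil>"
  have "(a - \<delta>) / h \<le> real_of_int l" "real_of_int l < (a - \<delta>) / h + 1"
    unfolding l_def by linarith+
  hence l: "a - \<delta> \<le> real_of_int l * h" "real_of_int l * h < a - \<delta> + h"
    using h by (simp_all add: field_simps)
  have "G (a - \<delta>) \<le> G (real_of_int l * h)" using mono l by (simp add: monoD)
  also have "\<dots> < c * (real_of_int l * h) + R" using near[of l] l h by (simp add: abs_le_iff abs_less_iff)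
  also have "\<dots> \<le> c * (a - 3 * \<delta> / 4) + R"
    using l c h by (intro add_right_mono mult_left_mono) auto
  finally show "G (a - \<delta>) < c * a" using small by (simp add: R_def algebra_simps)
qed

locale bahadur = prob_space M for M :: "'a measure" +
  fixes X :: "nat \<Rightarrow> 'a \<Rightarrow> real" and F f f' :: "real \<Rightarrow> real" and B \<beta> q :: real
  assumes indep: "indep_vars (\<lambda>_. borel) X UNIV"
    and cdf: "\<And>t x. prob {\<omega>\<in>space M. X t \<omega> \<le> x} = F x"
    and F_deriv: "\<And>x. (F has_real_derivative f x) (at x)"
    and f_deriv: "\<And>x. (f has_real_derivative f' x) (at x)"
    and deriv_bound: "\<And>x. f x + \<bar>f' x\<bar> \<le> B"
    and beta: "0 < \<beta>" "\<beta> < 1"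
    and F_q: "F q = \<beta>"
    and f_q_pos: "0 < f q"
begin

lemma random_variable_X [measurable]: "random_variable borel (X t)"
  using indep unfolding indep_vars_def by blast

lemma F_mono: "mono F"
proof (rule monoI)
  fix x y :: real
  assume "x \<le> y"
  hence "prob {\<omega>\<in>space M. X 0 \<omega> \<le> x} \<le> prob {\<omega>\<in>space M. X 0 \<omega> \<le> y}"
    by (intro finite_measure_mono) auto
  thus "F x \<le> F y" by (simp add: cdf)
qed

lemma F_le_1: "F x \<le> 1"
  using cdf[of 0 x] by (metis prob_le_1)

lemma f_nonneg: "0 \<le> f x"
  by (rule deriv_nonneg_if_mono[OF F_mono F_deriv])

lemma f_le_B: "f x \<le> B"
  using deriv_bound[of x] by simp

lemma f'_le_B: "\<bar>f' x\<bar> \<le> B"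
  using deriv_bound[of x] f_nonneg[of x] by simp

lemma B_pos: "0 < B"
  using f_q_pos f_le_B[of q] by simp

lemma F_taylor: "\<bar>F (q + x) - F q - f q * x\<bar> \<le> B * x\<^sup>2"
  by (rule taylor_first_order_le[OF F_deriv f_deriv f'_le_B])

lemma F_lipschitz: "\<bar>F y - F x\<bar> \<le> B * \<bar>y - x\<bar>"
  by (rule lipschitz_of_deriv_bound[OF F_deriv]) (use f_le_B f_nonneg in auto)

definition incr_set :: "real \<Rightarrow> real set" where
  "incr_set x = (if 0 \<le> x then {q<..q + x} else {q + x<..q})"

definition incr_prob :: "real \<Rightarrow> real" where
  "incr_prob x = \<bar>F (q + x) - F q\<bar>"

lemma incr_set_borel [measurable]: "incr_set x \<in> sets borel"
  by (simp add: incr_set_def)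

lemma prob_incr_set: "prob {\<omega>\<in>space M. X t \<omega> \<in> incr_set x} = incr_prob x"
proof -
  have diff: "prob {\<omega>\<in>space M. a < X t \<omega> \<and> X t \<omega> \<le> b} = F b - F a" if "a \<le> b" for a b
  proof -
    have "{\<omega>\<in>space M. a < X t \<omega> \<and> X t \<omega> \<le> b} = {\<omega>\<in>space M. X t \<omega> \<le> b} - {\<omega>\<in>space M. X t \<omega> \<le> a}"
      by auto
    also have "prob \<dots> = prob {\<omega>\<in>space M. X t \<omega> \<le> b} - prob {\<omega>\<in>space M. X t \<omega> \<le> a}"
      using that by (intro finite_measure_Diff) auto
    finally show ?thesis by (simp add: cdf)
  qed
  show ?thesis
  proof (cases "0 \<le> x")
    case True
    thus ?thesis using diff[of q "q + x"] F_mono[THEN monoD, of q "q + x"]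
      by (simp add: incr_set_def incr_prob_def)
  next
    case False
    thus ?thesis using diff[of "q + x" q] F_mono[THEN monoD, of "q + x" q]
      by (simp add: incr_set_def incr_prob_def)
  qed
qed

lemma incr_prob_le: "incr_prob x \<le> B * \<bar>x\<bar>"
  using F_lipschitz[of "q + x" q] by (simp add: incr_prob_def)

definition wlen :: "nat \<Rightarrow> nat \<Rightarrow> real" where
  "wlen i j = real (j - i + 1)"

definition count_le :: "nat \<Rightarrow> nat \<Rightarrow> real \<Rightarrow> 'a \<Rightarrow> real" where
  "count_le i j z \<omega> = (\<Sum>t\<in>{i..j}. indicator {..z} (X t \<omega>))"

definition count_incr :: "nat \<Rightarrow> nat \<Rightarrow> real \<Rightarrow> 'a \<Rightarrow> real" where
  "count_incr i j x \<omega> = (\<Sum>t\<in>{i..j}. indicator (incr_set x) (X t \<omega>))"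

lemma wlen_pos: "0 < wlen i j"
  by (simp add: wlen_def)

lemma card_window: "i \<le> j \<Longrightarrow> real (card {i..j}) = wlen i j"
  by (simp add: wlen_def Suc_diff_le)

lemma count_le_measurable [measurable]: "(\<lambda>\<omega>. count_le i j z \<omega>) \<in> borel_measurable M"
  unfolding count_le_def by measurable

lemma count_incr_measurable [measurable]: "(\<lambda>\<omega>. count_incr i j x \<omega>) \<in> borel_measurable M"
  unfolding count_incr_def by measurable

lemma emp_cdf_eq_count: "emp_cdf X i j \<omega> z = count_le i j z \<omega> / wlen i j"
  unfolding emp_cdf_def count_le_def wlen_def
  by (intro arg_cong2[where f = "(/)"] sum.cong) (auto simp: indicator_def)

lemma count_incr_eq:
  "count_incr i j x \<omega> = (if 0 \<le> x then count_le i j (q + x) \<omega> - count_le i j q \<omega>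
                                  else count_le i j q \<omega> - count_le i j (q + x) \<omega>)"
proof -
  have "indicator (incr_set x) y = (if 0 \<le> x then indicator {..q + x} y - indicator {..q} y
                                   else indicator {..q} y - indicator {..q + x} y :: real)" for y
    by (auto simp: incr_set_def indicator_def)
  thus ?thesis unfolding count_incr_def count_le_def
    by (cases "0 \<le> x") (simp_all add: sum_subtractf)
qed

lemma emp_incr_dev_eq:
  "\<bar>(emp_cdf X i j \<omega> (q + x) - emp_cdf X i j \<omega> q) - (F (q + x) - F q)\<bar>
     = \<bar>count_incr i j x \<omega> - wlen i j * incr_prob x\<bar> / wlen i j"
proof -
  define m where "m = wlen i j"
  have m: "0 < m" by (simp add: m_def wlen_pos)
  have "(emp_cdf X i j \<omega> (q + x) - emp_cdf X i j \<omega> q) - (F (q + x) - F q)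
      = (if 0 \<le> x then 1 else -1) * ((count_incr i j x \<omega> - m * incr_prob x) / m)"
  proof (cases "0 \<le> x")
    case True
    hence "F q \<le> F (q + x)" using F_mono by (simp add: monoD)
    thus ?thesis using True m
      by (simp add: emp_cdf_eq_count count_incr_eq incr_prob_def m_def diff_divide_distrib)
  next
    case False
    hence "F (q + x) \<le> F q" using F_mono by (simp add: monoD)
    thus ?thesis using False m
      by (simp add: emp_cdf_eq_count count_incr_eq incr_prob_def m_def diff_divide_distrib)
  qed
  thus ?thesis using m by (simp add: abs_mult m_def)
qed

definition bahadur_term :: "nat \<Rightarrow> nat \<Rightarrow> 'a \<Rightarrow> real" where
  "bahadur_term i j \<omega> = (\<beta> - emp_cdf X i j \<omega> q) / f q"

definition remainder :: "nat \<Rightarrow> nat \<Rightarrow> 'a \<Rightarrow> real" where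
  "remainder i j \<omega> = emp_quantile X \<beta> i j \<omega> - q - bahadur_term i j \<omega>"

lemma abs_remainder_le_of_bracket:
  assumes "i \<le> j" and "\<beta> \<le> emp_cdf X i j \<omega> (q + a + d)" and "emp_cdf X i j \<omega> (q + a - d) < \<beta>"
    and "a = bahadur_term i j \<omega>"
  shows "\<bar>remainder i j \<omega>\<bar> \<le> d"
  using emp_quantile_le[OF assms(1) beta(1) assms(2)] le_emp_quantile[OF assms(1) _ assms(3)] beta
  by (simp add: remainder_def assms(4) abs_le_iff)

lemma abs_remainder_le_of_crossings:
  assumes ij: "i \<le> j" and A: "\<bar>bahadur_term i j \<omega>\<bar> \<le> A"
    and "\<beta> \<le> emp_cdf X i j \<omega> (q + d)" and "emp_cdf X i j \<omega> (q - d) < \<beta>"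
  shows "\<bar>remainder i j \<omega>\<bar> \<le> d + A"
  using emp_quantile_le[OF ij beta(1) assms(3)] le_emp_quantile[OF ij _ assms(4)] A beta
  by (simp add: remainder_def abs_le_iff)

lemma abs_remainder_le_of_grid:
  assumes ij: "i \<le> j" and \<delta>: "0 < \<delta>" and A: "\<bar>bahadur_term i j \<omega>\<bar> \<le> A"
    and K: "4 * A / \<delta> + 5 \<le> K" and small: "B * (A + 2 * \<delta>)\<^sup>2 \<le> f q * \<delta> / 2"
    and grid: "\<And>k::int. \<bar>real_of_int k\<bar> \<le> K \<Longrightarrow>
       \<bar>count_incr i j (real_of_int k * (\<delta> / 4)) \<omega> - wlen i j * incr_prob (real_of_int k * (\<delta> / 4))\<bar>
         < wlen i j * (f q * \<delta> / 4)"
  shows "\<bar>remainder i j \<omega>\<bar> \<le> \<delta>"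
proof -
  define a where "a = bahadur_term i j \<omega>"
  define G where "G x = emp_cdf X i j \<omega> (q + x) - emp_cdf X i j \<omega> q" for x
  have "mono G" unfolding G_def by (rule monoI) (simp add: emp_cdf_mono)
  moreover have "\<bar>(F (q + x) - F q) - f q * x\<bar> \<le> B * x\<^sup>2" for x
    using F_taylor by simp
  moreover have "\<bar>G (real_of_int k * (\<delta> / 4)) - (F (q + real_of_int k * (\<delta> / 4)) - F q)\<bar> < f q * \<delta> / 4"
    if "\<bar>real_of_int k\<bar> \<le> K" for k :: int
    using grid[OF that] wlen_pos[of i j] unfolding G_def emp_incr_dev_eq by (simp add: field_simps)
  moreover have "4 * \<bar>a\<bar> / \<delta> + 5 \<le> K"
    using A K \<delta> divide_right_mono[of "4 * \<bar>a\<bar>" "4 * A" \<delta>] by (simp add: a_def)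
  moreover have "B * (\<bar>a\<bar> + 2 * \<delta>)\<^sup>2 + f q * \<delta> / 4 \<le> 3 * f q * \<delta> / 4"
  proof -
    have "(\<bar>a\<bar> + 2 * \<delta>)\<^sup>2 \<le> (A + 2 * \<delta>)\<^sup>2" using A \<delta> by (intro power_mono) (auto simp: a_def)
    hence "B * (\<bar>a\<bar> + 2 * \<delta>)\<^sup>2 \<le> B * (A + 2 * \<delta>)\<^sup>2" using B_pos by (intro mult_left_mono) auto
    thus ?thesis using small by linarith
  qed
  ultimately have "f q * a \<le> G (a + \<delta>)" "G (a - \<delta>) < f q * a"
    using mono_grid_bracket[of G "\<lambda>x. F (q + x) - F q" "f q" B \<delta> K "f q * \<delta> / 4" a]
      f_q_pos B_pos \<delta> by auto
  moreover have "f q * a = \<beta> - emp_cdf X i j \<omega> q" using f_q_pos by (simp add: a_def bahadur_term_def)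
  ultimately show ?thesis
    by (intro abs_remainder_le_of_bracket[OF ij _ _ a_def]) (simp_all add: G_def algebra_simps)
qed

lemma abs_bahadur_term_le:
  assumes "i \<le> j"
  shows "\<bar>bahadur_term i j \<omega>\<bar> \<le> 1 / f q"
proof -
  have "\<bar>\<beta> - emp_cdf X i j \<omega> q\<bar> \<le> 1"
    using emp_cdf_nonneg[of X i j \<omega> q] emp_cdf_le_1[OF assms, of X \<omega> q] beta by (simp add: abs_le_iff)
  thus ?thesis using f_q_pos by (simp add: bahadur_term_def abs_divide divide_right_mono)
qed

lemma abs_remainder_le_of_range:
  assumes ij: "i \<le> j" and T: "\<And>t. t \<in> {i..j} \<Longrightarrow> - T < X t \<omega> \<and> X t \<omega> \<le> T"
  shows "\<bar>remainder i j \<omega>\<bar> \<le> T + \<bar>q\<bar> + 1 / f q"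
proof -
  have "emp_cdf X i j \<omega> T = 1" by (rule emp_cdf_eq_1) (use T ij in auto)
  hence "emp_quantile X \<beta> i j \<omega> \<le> T" using beta by (intro emp_quantile_le[OF ij]) auto
  moreover have "emp_cdf X i j \<omega> (- T) = 0" by (rule emp_cdf_eq_0) (use T in auto)
  hence "- T \<le> emp_quantile X \<beta> i j \<omega>" using beta by (intro le_emp_quantile[OF ij]) auto
  moreover have "- \<bar>q\<bar> \<le> q" "q \<le> \<bar>q\<bar>" by auto
  ultimately show ?thesis
    using abs_bahadur_term_le[OF ij, of \<omega>] unfolding remainder_def abs_le_iff by linarith
qed

text \<open>For a mesh above \<open>\<delta>\<^sub>0\<close> the quantile is only located to within \<open>\<eta>\<close> of \<open>q\<close>, using the
  crossings of the empirical distribution at \<open>q \<plusminus> \<eta>\<close>, where \<open>F\<close> is \<open>\<rho>\<close> away from \<open>\<beta>\<close>.\<close>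

definition "\<delta>\<^sub>0 = f q / (32 * B)"
definition "\<eta> = \<delta>\<^sub>0 / 2"
definition "\<rho> = f q * \<eta> / 2"

lemma \<delta>\<^sub>0_pos: "0 < \<delta>\<^sub>0" using f_q_pos B_pos by (simp add: \<delta>\<^sub>0_def)
lemma \<eta>_pos: "0 < \<eta>" using \<delta>\<^sub>0_pos by (simp add: \<eta>_def)
lemma \<rho>_pos: "0 < \<rho>" using \<eta>_pos f_q_pos by (simp add: \<rho>_def)

lemma taylor_error_at_\<eta>: "B * \<eta>\<^sup>2 = f q * \<eta> / 64"
  using B_pos by (simp add: \<eta>_def \<delta>\<^sub>0_def power2_eq_square)

lemma F_above: "\<beta> + \<rho> \<le> F (q + \<eta>)"
proof -
  have "0 \<le> f q * \<eta>" using f_q_pos \<eta>_pos by simp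
  thus ?thesis using F_taylor[of \<eta>] taylor_error_at_\<eta> unfolding abs_le_iff \<rho>_def F_q by linarith
qed

lemma F_below: "F (q - \<eta>) \<le> \<beta> - \<rho>"
proof -
  have "0 \<le> f q * \<eta>" using f_q_pos \<eta>_pos by simp
  thus ?thesis using F_taylor[of "- \<eta>"] taylor_error_at_\<eta> unfolding abs_le_iff \<rho>_def F_q by simp
qed

lemma \<rho>_le_1: "\<rho> \<le> 1"
  using F_above F_le_1[of "q + \<eta>"] beta by simp

definition range_exceed_event :: "real \<Rightarrow> nat \<Rightarrow> 'a set" where
  "range_exceed_event T n = (\<Union>t\<in>{1..n}. {\<omega>\<in>space M. X t \<omega> \<le> - T} \<union> {\<omega>\<in>space M. T < X t \<omega>})"

definition confident_windows :: "real \<Rightarrow> nat \<Rightarrow> (nat \<times> nat) set" where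
  "confident_windows r n = {(i, j). 1 \<le> i \<and> i < j \<and> j \<le> n \<and> r ^ 4 \<le> wlen i j}"

lemma range_exceed_event_in_events [measurable]: "range_exceed_event T n \<in> events"
  unfolding range_exceed_event_def by measurable

lemma confident_windows_subset: "confident_windows r n \<subseteq> {1..n} \<times> {1..n}"
  by (auto simp: confident_windows_def)

lemma finite_confident_windows: "finite (confident_windows r n)"
  by (rule finite_subset[OF confident_windows_subset]) simp

lemma card_confident_windows_le: "real (card (confident_windows r n)) \<le> real n ^ 2"
proof -
  have "card (confident_windows r n) \<le> card ({1..n} \<times> {1..n})"
    by (intro card_mono confident_windows_subset) simp
  thus ?thesis by (simp add: power2_eq_square flip: of_nat_mult)
qed

end

locale bahadur_eps = bahadur +
  fixes \<epsilon> :: real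
  assumes eps_pos: "0 < \<epsilon>"
begin

text \<open>Windows are analysed at the scale \<open>S\<close> (eventually \<open>\<surd>n\<close>) with a confidence parameter \<open>r\<close>
  (eventually \<open>n powr (1/20)\<close>): the target accuracy of \<open>remainder\<close> on a window of length \<open>m\<close>
  is \<open>\<epsilon> S / m\<close>, and off an event of small probability the Bahadur term is at most \<open>r / (\<surd>m f q)\<close>.\<close>

definition "mesh S i j = \<epsilon> * S / wlen i j"
definition "term_bound r i j = r / (sqrt (wlen i j) * f q)"
definition "grid_bound r S i j = 4 * term_bound r i j / mesh S i j + 5"

definition "centre_dev_event r i j =
  {\<omega>\<in>space M. r * sqrt (wlen i j) \<le> \<bar>count_le i j q \<omega> - wlen i j * \<beta>\<bar>}"
definition "upper_dev_event i j =
  {\<omega>\<in>space M. count_le i j (q + \<eta>) \<omega> - wlen i j * F (q + \<eta>) \<le> - (wlen i j * \<rho>)}"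
definition "lower_dev_event i j =
  {\<omega>\<in>space M. wlen i j * \<rho> \<le> count_le i j (q - \<eta>) \<omega> - wlen i j * F (q - \<eta>)}"
definition "grid_dev_event S i j k =
  {\<omega>\<in>space M. wlen i j * (f q * mesh S i j / 4) \<le>
     \<bar>count_incr i j (real_of_int k * (mesh S i j / 4)) \<omega>
        - wlen i j * incr_prob (real_of_int k * (mesh S i j / 4))\<bar>}"
definition "grid_dev_events r S i j =
  (\<Union>k\<in>{k::int. \<bar>real_of_int k\<bar> \<le> grid_bound r S i j}. grid_dev_event S i j k)"
definition "bad_event r S i j =
  centre_dev_event r i j \<union> upper_dev_event i j \<union> lower_dev_event i j \<union> grid_dev_events r S i j"

lemma wlen_mult_mesh: "wlen i j * mesh S i j = \<epsilon> * S"
  using wlen_pos[of i j] by (simp add: mesh_def)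

lemma mesh_pos: "0 < S \<Longrightarrow> 0 < mesh S i j"
  using eps_pos wlen_pos[of i j] by (simp add: mesh_def)

lemma wlen_mult_term_bound_le:
  assumes "0 \<le> r" and "wlen i j \<le> S\<^sup>2" and "0 < S"
  shows "wlen i j * term_bound r i j \<le> r * S / f q"
proof -
  define m where "m = wlen i j"
  have m: "0 < m" by (simp add: m_def wlen_pos)
  have "m * term_bound r i j = (m / sqrt m) * (r / f q)" by (simp add: term_bound_def m_def)
  also have "m / sqrt m = sqrt m" using m by (simp add: real_div_sqrt)
  also have "sqrt m \<le> S" using assms(2,3) by (simp add: m_def real_le_lsqrt)
  finally show ?thesis
    using assms(1) f_q_pos by (simp add: m_def mult_right_mono divide_right_mono mult.commute)
qed

lemma term_bound_le_of_confident:
  assumes "1 \<le> r" and "r ^ 4 \<le> wlen i j"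
  shows "term_bound r i j \<le> 1 / (r * f q)"
proof -
  have "sqrt (r ^ 4) = r\<^sup>2" by (simp add: real_sqrt_abs2[of "r\<^sup>2", simplified] power_mult[symmetric])
  hence "r\<^sup>2 \<le> sqrt (wlen i j)" using assms(2) by (metis real_sqrt_le_mono)
  hence "r / (sqrt (wlen i j) * f q) \<le> r / (r\<^sup>2 * f q)"
    using assms(1) f_q_pos wlen_pos[of i j] by (intro divide_left_mono mult_right_mono mult_pos_pos) auto
  thus ?thesis using assms(1) by (simp add: term_bound_def power2_eq_square)
qed

lemma abs_bahadur_term_le_term_bound:
  assumes "\<omega> \<in> space M" and "\<omega> \<notin> centre_dev_event r i j"
  shows "\<bar>bahadur_term i j \<omega>\<bar> \<le> term_bound r i j"
proof -
  define m where "m = wlen i j"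
  have m: "0 < m" by (simp add: m_def wlen_pos)
  have dev: "\<bar>count_le i j q \<omega> - m * \<beta>\<bar> < r * sqrt m"
    using assms by (auto simp: centre_dev_event_def m_def)
  have "bahadur_term i j \<omega> = - (count_le i j q \<omega> - m * \<beta>) / (m * f q)"
    using m f_q_pos by (simp add: bahadur_term_def emp_cdf_eq_count m_def field_simps)
  hence "\<bar>bahadur_term i j \<omega>\<bar> = \<bar>count_le i j q \<omega> - m * \<beta>\<bar> / (m * f q)"
    using m f_q_pos by (simp add: abs_divide abs_mult)
  also have "\<dots> \<le> r * sqrt m / (m * f q)"
    using dev m f_q_pos by (intro divide_right_mono) auto
  also have "r * sqrt m / (m * f q) = term_bound r i j"
  proof -
    have e: "m * f q = sqrt m * (sqrt m * f q)" using m by (simp add: mult.assoc[symmetric])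
    show ?thesis unfolding e using m f_q_pos by (simp add: term_bound_def m_def)
  qed
  finally show ?thesis .
qed

lemma quadratic_error_le_if_fine:
  assumes S: "0 < S" and fine: "mesh S i j \<le> \<delta>\<^sub>0" and quad: "8 * B * r\<^sup>2 \<le> f q ^ 3 * \<epsilon> * S"
  shows "B * (term_bound r i j + 2 * mesh S i j)\<^sup>2 \<le> f q * mesh S i j / 2"
proof -
  define m where "m = wlen i j"
  have m: "0 < m" by (simp add: m_def wlen_pos)
  define \<delta> where "\<delta> = mesh S i j"
  have \<delta>: "0 < \<delta>" using mesh_pos[OF S] by (simp add: \<delta>_def)
  define A where "A = term_bound r i j"
  have "(A + 2 * \<delta>)\<^sup>2 \<le> 2 * A\<^sup>2 + 8 * \<delta>\<^sup>2"
    using sum_squares_ge_zero[of "A - 2 * \<delta>" 0] by (simp add: power2_eq_square algebra_simps)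
  hence "B * (A + 2 * \<delta>)\<^sup>2 \<le> B * (2 * A\<^sup>2 + 8 * \<delta>\<^sup>2)"
    using B_pos by (intro mult_left_mono) auto
  moreover have "2 * B * A\<^sup>2 \<le> f q * \<delta> / 4"
  proof -
    have "2 * B * A\<^sup>2 = (8 * B * r\<^sup>2) / (4 * m * (f q)\<^sup>2)"
      using m f_q_pos by (simp add: A_def term_bound_def m_def power_divide power_mult_distrib)
    also have "\<dots> \<le> (f q ^ 3 * \<epsilon> * S) / (4 * m * (f q)\<^sup>2)"
      using quad m f_q_pos by (intro divide_right_mono) auto
    also have "\<dots> = f q * \<delta> / 4"
      using m f_q_pos wlen_mult_mesh[of i j S]
      by (simp add: \<delta>_def m_def[symmetric] field_simps power2_eq_square power3_eq_cube)
    finally show ?thesis .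
  qed
  moreover have "8 * B * \<delta>\<^sup>2 \<le> f q * \<delta> / 4"
  proof -
    have "32 * B * \<delta> \<le> f q" using fine B_pos by (simp add: \<delta>_def \<delta>\<^sub>0_def field_simps)
    hence "(32 * B * \<delta>) * \<delta> \<le> f q * \<delta>" using \<delta> by (intro mult_right_mono) auto
    thus ?thesis by (simp add: power2_eq_square)
  qed
  ultimately show ?thesis by (simp add: A_def \<delta>_def algebra_simps)
qed

lemma abs_remainder_le_mesh_if_fine:
  assumes \<omega>: "\<omega> \<in> space M" "\<omega> \<notin> bad_event r S i j" and ij: "i \<le> j" and S: "0 < S"
    and fine: "mesh S i j \<le> \<delta>\<^sub>0" and quad: "8 * B * r\<^sup>2 \<le> f q ^ 3 * \<epsilon> * S"
  shows "\<bar>remainder i j \<omega>\<bar> \<le> mesh S i j"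
proof (rule abs_remainder_le_of_grid[OF ij mesh_pos[OF S] _ _ quadratic_error_le_if_fine[OF S fine quad]])
  show "\<bar>bahadur_term i j \<omega>\<bar> \<le> term_bound r i j"
    using abs_bahadur_term_le_term_bound[OF \<omega>(1)] \<omega>(2) by (simp add: bad_event_def)
  show "4 * term_bound r i j / mesh S i j + 5 \<le> grid_bound r S i j" by (simp add: grid_bound_def)
  show "\<bar>count_incr i j (real_of_int k * (mesh S i j / 4)) \<omega>
      - wlen i j * incr_prob (real_of_int k * (mesh S i j / 4))\<bar> < wlen i j * (f q * mesh S i j / 4)"
    if "\<bar>real_of_int k\<bar> \<le> grid_bound r S i j" for k :: int
    using \<omega> that by (auto simp: bad_event_def grid_dev_events_def grid_dev_event_def)
qed

lemma abs_remainder_le_mesh_if_coarse: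
  assumes \<omega>: "\<omega> \<in> space M" "\<omega> \<notin> bad_event r S i j" and ij: "i \<le> j"
    and r: "1 \<le> r" "r ^ 4 \<le> wlen i j" and coarse: "\<delta>\<^sub>0 < mesh S i j"
    and conf: "2 \<le> r * f q * \<delta>\<^sub>0"
  shows "\<bar>remainder i j \<omega>\<bar> \<le> mesh S i j"
proof -
  define m where "m = wlen i j"
  have m: "0 < m" by (simp add: m_def wlen_pos)
  have up: "\<beta> \<le> emp_cdf X i j \<omega> (q + \<eta>)"
  proof -
    have "- (m * \<rho>) < count_le i j (q + \<eta>) \<omega> - m * F (q + \<eta>)"
      using \<omega> by (auto simp: bad_event_def upper_dev_event_def m_def)
    moreover have "m * (\<beta> + \<rho>) \<le> m * F (q + \<eta>)" using F_above m by (intro mult_left_mono) auto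
    ultimately have "m * \<beta> \<le> count_le i j (q + \<eta>) \<omega>" by (simp add: algebra_simps)
    thus ?thesis using m by (simp add: emp_cdf_eq_count m_def field_simps)
  qed
  have lo: "emp_cdf X i j \<omega> (q - \<eta>) < \<beta>"
  proof -
    have "count_le i j (q - \<eta>) \<omega> - m * F (q - \<eta>) < m * \<rho>"
      using \<omega> by (auto simp: bad_event_def lower_dev_event_def m_def)
    moreover have "m * F (q - \<eta>) \<le> m * (\<beta> - \<rho>)" using F_below m by (intro mult_left_mono) auto
    ultimately have "count_le i j (q - \<eta>) \<omega> < m * \<beta>" by (simp add: algebra_simps)
    thus ?thesis using m by (simp add: emp_cdf_eq_count m_def field_simps)
  qed
  have small_term: "\<bar>bahadur_term i j \<omega>\<bar> \<le> \<delta>\<^sub>0 / 2"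
  proof -
    have "1 / (r * f q) \<le> \<delta>\<^sub>0 / 2" using conf r f_q_pos by (simp add: field_simps)
    thus ?thesis
      using abs_bahadur_term_le_term_bound[OF \<omega>(1)] \<omega>(2) term_bound_le_of_confident[OF r]
      by (force simp: bad_event_def)
  qed
  have "\<bar>remainder i j \<omega>\<bar> \<le> \<eta> + \<delta>\<^sub>0 / 2"
    by (rule abs_remainder_le_of_crossings[OF ij small_term up lo])
  thus ?thesis using coarse by (simp add: \<eta>_def)
qed

lemma wlen_mult_abs_remainder_le:
  assumes "\<omega> \<in> space M" "\<omega> \<notin> bad_event r S i j" and "i \<le> j" and "0 < S"
    and "1 \<le> r" "r ^ 4 \<le> wlen i j"
    and "8 * B * r\<^sup>2 \<le> f q ^ 3 * \<epsilon> * S" and "2 \<le> r * f q * \<delta>\<^sub>0"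
  shows "wlen i j * \<bar>remainder i j \<omega>\<bar> \<le> \<epsilon> * S"
proof -
  have "\<bar>remainder i j \<omega>\<bar> \<le> mesh S i j"
    using abs_remainder_le_mesh_if_fine[OF assms(1-4) _ assms(7)]
      abs_remainder_le_mesh_if_coarse[OF assms(1-3,5,6) _ assms(8)] by force
  hence "wlen i j * \<bar>remainder i j \<omega>\<bar> \<le> wlen i j * mesh S i j"
    using wlen_pos[of i j] by (intro mult_left_mono) auto
  thus ?thesis by (simp add: wlen_mult_mesh)
qed

lemma bad_event_sets [measurable]:
  "centre_dev_event r i j \<in> events" "upper_dev_event i j \<in> events"
  "lower_dev_event i j \<in> events" "grid_dev_event S i j k \<in> events"
  unfolding centre_dev_event_def upper_dev_event_def lower_dev_event_def grid_dev_event_def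
  by simp_all

lemma grid_dev_events_sets [measurable]: "grid_dev_events r S i j \<in> events"
  unfolding grid_dev_events_def by (intro sets.finite_UN finite_int_abs_le bad_event_sets)

lemma bad_event_in_events [measurable]: "bad_event r S i j \<in> events"
  unfolding bad_event_def by measurable

lemma prob_centre_dev_event_le:
  assumes ij: "i \<le> j" and r: "1 \<le> r" "r ^ 4 \<le> wlen i j"
  shows "prob (centre_dev_event r i j) \<le> 2 * exp (- r\<^sup>2 / 4)"
proof -
  define m where "m = wlen i j"
  have m: "0 < m" by (simp add: m_def wlen_pos)
  have "sqrt (r ^ 4) = r\<^sup>2" by (simp add: real_sqrt_abs2[of "r\<^sup>2", simplified] power_mult[symmetric])
  hence r2m: "r\<^sup>2 \<le> sqrt m" using r(2) by (metis m_def real_sqrt_le_mono)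
  define s where "s = r / (2 * sqrt m)"
  have "r \<le> r\<^sup>2" using r(1) by (simp add: power2_eq_square)
  hence s: "0 < s" "s \<le> 1" using r(1) r2m m by (simp_all add: s_def field_simps)
  have "prob (centre_dev_event r i j) = prob {\<omega>\<in>space M. r * sqrt m \<le>
      \<bar>(\<Sum>t\<in>{i..j}. indicator {..q} (X t \<omega>)) - real (card {i..j}) * \<beta>\<bar>}"
    unfolding card_window[OF ij] by (simp add: centre_dev_event_def count_le_def m_def)
  also have "\<dots> \<le> 2 * exp (real (card {i..j}) * \<beta> * s\<^sup>2 - s * (r * sqrt m))"
    by (rule prob_abs_centred_count_ge_le[OF indep _ _ _ s]) (simp_all add: cdf F_q)
  also have "real (card {i..j}) * \<beta> * s\<^sup>2 - s * (r * sqrt m) = \<beta> * r\<^sup>2 / 4 - r\<^sup>2 / 2"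
    using m unfolding card_window[OF ij] m_def[symmetric] by (simp add: s_def power2_eq_square field_simps)
  also have "\<dots> \<le> - r\<^sup>2 / 4" using beta mult_right_mono[of \<beta> 1 "r\<^sup>2"] by simp
  finally show ?thesis by simp
qed

lemma prob_upper_dev_event_le:
  assumes ij: "i \<le> j" and r: "r ^ 4 \<le> wlen i j"
  shows "prob (upper_dev_event i j) \<le> exp (- (r ^ 4 * \<rho>\<^sup>2 / 4))"
proof -
  define m where "m = wlen i j"
  define s where "s = \<rho> / 2"
  have s: "0 < s" "s \<le> 1" using \<rho>_pos \<rho>_le_1 by (simp_all add: s_def)
  have "prob (upper_dev_event i j) = prob {\<omega>\<in>space M.
      (\<Sum>t\<in>{i..j}. indicator {..q + \<eta>} (X t \<omega>)) - real (card {i..j}) * F (q + \<eta>) \<le> - (m * \<rho>)}"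
    unfolding card_window[OF ij] by (simp add: upper_dev_event_def count_le_def m_def)
  also have "\<dots> \<le> exp (real (card {i..j}) * F (q + \<eta>) * s\<^sup>2 - s * (m * \<rho>))"
    by (rule prob_centred_count_le_le[OF indep _ _ _ s]) (simp_all add: cdf)
  also have "\<dots> \<le> exp (m * s\<^sup>2 - s * (m * \<rho>))"
    using mult_right_mono[OF mult_left_le[OF F_le_1[of "q + \<eta>"] less_imp_le[OF wlen_pos]], of "s\<^sup>2"]
    unfolding card_window[OF ij] m_def by simp
  also have "m * s\<^sup>2 - s * (m * \<rho>) = - (m * \<rho>\<^sup>2 / 4)" by (simp add: s_def power2_eq_square field_simps)
  also have "exp \<dots> \<le> exp (- (r ^ 4 * \<rho>\<^sup>2 / 4))" using r by (simp add: m_def mult_right_mono)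
  finally show ?thesis .
qed

lemma prob_lower_dev_event_le:
  assumes ij: "i \<le> j" and r: "r ^ 4 \<le> wlen i j"
  shows "prob (lower_dev_event i j) \<le> exp (- (r ^ 4 * \<rho>\<^sup>2 / 4))"
proof -
  define m where "m = wlen i j"
  define s where "s = \<rho> / 2"
  have s: "0 < s" "s \<le> 1" using \<rho>_pos \<rho>_le_1 by (simp_all add: s_def)
  have "prob (lower_dev_event i j) = prob {\<omega>\<in>space M.
      m * \<rho> \<le> (\<Sum>t\<in>{i..j}. indicator {..q - \<eta>} (X t \<omega>)) - real (card {i..j}) * F (q - \<eta>)}"
    unfolding card_window[OF ij] by (simp add: lower_dev_event_def count_le_def m_def)
  also have "\<dots> \<le> exp (real (card {i..j}) * F (q - \<eta>) * s\<^sup>2 - s * (m * \<rho>))"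
    by (rule prob_centred_count_ge_le[OF indep _ _ _ s]) (simp_all add: cdf)
  also have "\<dots> \<le> exp (m * s\<^sup>2 - s * (m * \<rho>))"
    using mult_right_mono[OF mult_left_le[OF F_le_1[of "q - \<eta>"] less_imp_le[OF wlen_pos]], of "s\<^sup>2"]
    unfolding card_window[OF ij] m_def by simp
  also have "m * s\<^sup>2 - s * (m * \<rho>) = - (m * \<rho>\<^sup>2 / 4)" by (simp add: s_def power2_eq_square field_simps)
  also have "exp \<dots> \<le> exp (- (r ^ 4 * \<rho>\<^sup>2 / 4))" using r by (simp add: m_def mult_right_mono)
  finally show ?thesis .
qed

text \<open>The grid events are controlled by a Chernoff bound that uses the small success probability
  \<open>incr_prob\<close> of the increments, not just boundedness; this is what makes the exponent grow
  like \<open>S / r\<close> instead of staying bounded.\<close>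

definition "grid_mass_const = B * (1 / f q + 2 * \<epsilon>)"
definition "grid_dev_const = f q * \<epsilon> / 4"
definition "grid_rate = min 1 (grid_dev_const / (2 * grid_mass_const))"

definition "bad_event_bound r S =
  2 * exp (- r\<^sup>2 / 4) + 2 * exp (- (r ^ 4 * \<rho>\<^sup>2 / 4))
    + (8 * r / (f q * \<epsilon>) + 11) * (2 * exp (- (grid_rate * S / r) * grid_dev_const / 2))"

lemma grid_mass_const_pos: "0 < grid_mass_const"
  using B_pos f_q_pos eps_pos by (simp add: grid_mass_const_def add_pos_pos)

lemma grid_dev_const_pos: "0 < grid_dev_const"
  using f_q_pos eps_pos by (simp add: grid_dev_const_def)

lemma grid_rate_pos: "0 < grid_rate"
  using grid_mass_const_pos grid_dev_const_pos by (simp add: grid_rate_def)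

lemma bad_event_bound_nonneg: "0 \<le> r \<Longrightarrow> 0 \<le> bad_event_bound r S"
  using f_q_pos eps_pos unfolding bad_event_bound_def
  by (intro add_nonneg_nonneg mult_nonneg_nonneg) auto

lemma grid_bound_eq: "0 < S \<Longrightarrow> grid_bound r S i j = 4 * (wlen i j * term_bound r i j) / (\<epsilon> * S) + 5"
  using wlen_pos[of i j] eps_pos by (simp add: grid_bound_def mesh_def field_simps)

lemma grid_bound_le:
  assumes "0 \<le> r" and "wlen i j \<le> S\<^sup>2" and "0 < S"
  shows "grid_bound r S i j \<le> 4 * r / (f q * \<epsilon>) + 5"
proof -
  have "4 * (wlen i j * term_bound r i j) / (\<epsilon> * S) \<le> 4 * (r * S / f q) / (\<epsilon> * S)"
    using wlen_mult_term_bound_le[OF assms] eps_pos assms(3) by (intro divide_right_mono) auto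
  thus ?thesis using grid_bound_eq[OF assms(3)] assms(3) by (simp add: field_simps)
qed

lemma grid_bound_nonneg: "0 \<le> r \<Longrightarrow> 0 < S \<Longrightarrow> 0 \<le> grid_bound r S i j"
  using f_q_pos eps_pos wlen_pos[of i j]
  by (simp add: grid_bound_def term_bound_def mesh_def)

lemma wlen_mult_incr_prob_le:
  assumes k: "\<bar>real_of_int k\<bar> \<le> grid_bound r S i j"
    and r: "1 \<le> r" and mS: "wlen i j \<le> S\<^sup>2" and S: "0 < S"
  shows "wlen i j * incr_prob (real_of_int k * (mesh S i j / 4)) \<le> grid_mass_const * r * S"
proof -
  define m where "m = wlen i j"
  define \<delta> where "\<delta> = mesh S i j"
  have m: "0 < m" by (simp add: m_def wlen_pos)
  have \<delta>: "0 < \<delta>" using mesh_pos[OF S] by (simp add: \<delta>_def)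
  have "\<bar>real_of_int k * (\<delta> / 4)\<bar> \<le> grid_bound r S i j * (\<delta> / 4)"
    using k \<delta> by (simp add: abs_mult mult_right_mono)
  hence "B * \<bar>real_of_int k * (\<delta> / 4)\<bar> \<le> B * (grid_bound r S i j * (\<delta> / 4))"
    using B_pos by (intro mult_left_mono) auto
  hence "m * incr_prob (real_of_int k * (\<delta> / 4)) \<le> m * (B * (grid_bound r S i j * (\<delta> / 4)))"
    using m incr_prob_le[of "real_of_int k * (\<delta> / 4)"] by (intro mult_left_mono) auto
  also have "grid_bound r S i j * (\<delta> / 4) = term_bound r i j + 5 / 4 * \<delta>"
    using \<delta> by (simp add: grid_bound_def \<delta>_def field_simps)
  also have "m * (B * (term_bound r i j + 5 / 4 * \<delta>)) = B * (m * term_bound r i j + 5 / 4 * (\<epsilon> * S))"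
    using wlen_mult_mesh[of i j S] by (simp add: m_def \<delta>_def algebra_simps)
  also have "\<dots> \<le> B * (r * S / f q + 2 * \<epsilon> * r * S)"
  proof -
    have "m * term_bound r i j \<le> r * S / f q"
      using wlen_mult_term_bound_le[OF _ mS S, of r] r by (simp add: m_def)
    moreover have "5 / 4 * (\<epsilon> * S) \<le> (2 * r) * (\<epsilon> * S)"
      using r eps_pos S by (intro mult_right_mono) auto
    ultimately show ?thesis using B_pos by (intro mult_left_mono) (auto simp: mult_ac)
  qed
  also have "\<dots> = grid_mass_const * r * S" by (simp add: grid_mass_const_def field_simps)
  finally show ?thesis by (simp add: m_def \<delta>_def)
qed

lemma prob_grid_dev_event_le:
  assumes ij: "i \<le> j" and k: "\<bar>real_of_int k\<bar> \<le> grid_bound r S i j"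
    and r: "1 \<le> r" and mS: "wlen i j \<le> S\<^sup>2" and S: "0 < S"
  shows "prob (grid_dev_event S i j k) \<le> 2 * exp (- (grid_rate * S / r) * grid_dev_const / 2)"
proof -
  define m where "m = wlen i j"
  define x where "x = real_of_int k * (mesh S i j / 4)"
  define s where "s = grid_rate / r"
  have s: "0 < s" "s \<le> 1"
    using grid_rate_pos r by (auto simp: s_def grid_rate_def field_simps)
  have dev: "m * (f q * mesh S i j / 4) = grid_dev_const * S"
    using wlen_mult_mesh[of i j S] by (simp add: m_def grid_dev_const_def field_simps)
  have "prob (grid_dev_event S i j k) = prob {\<omega>\<in>space M. m * (f q * mesh S i j / 4) \<le>
      \<bar>(\<Sum>t\<in>{i..j}. indicator (incr_set x) (X t \<omega>)) - real (card {i..j}) * incr_prob x\<bar>}"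
    unfolding card_window[OF ij] by (simp add: grid_dev_event_def count_incr_def m_def x_def)
  also have "\<dots> \<le> 2 * exp (real (card {i..j}) * incr_prob x * s\<^sup>2 - s * (m * (f q * mesh S i j / 4)))"
    by (rule prob_abs_centred_count_ge_le[OF indep incr_set_borel prob_incr_set _ s]) simp
  also have "\<dots> \<le> 2 * exp (grid_mass_const * r * S * s\<^sup>2 - s * (grid_dev_const * S))"
    using mult_right_mono[OF wlen_mult_incr_prob_le[OF k r mS S], of "s\<^sup>2"]
    unfolding card_window[OF ij] x_def[symmetric] m_def[symmetric] dev by simp
  also have "grid_mass_const * r * S * s\<^sup>2 - s * (grid_dev_const * S)
      = (grid_rate * S / r) * (grid_mass_const * grid_rate - grid_dev_const)"
    using r by (simp add: s_def power2_eq_square field_simps)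
  also have "\<dots> \<le> (grid_rate * S / r) * (- grid_dev_const / 2)"
  proof -
    have "grid_mass_const * grid_rate \<le> grid_dev_const / 2"
      using grid_mass_const_pos by (simp add: grid_rate_def min_def field_simps)
    thus ?thesis using grid_rate_pos S r by (intro mult_left_mono) auto
  qed
  finally show ?thesis by simp
qed

lemma prob_grid_dev_events_le:
  assumes ij: "i \<le> j" and r: "1 \<le> r" and mS: "wlen i j \<le> S\<^sup>2" and S: "0 < S"
  shows "prob (grid_dev_events r S i j)
    \<le> (8 * r / (f q * \<epsilon>) + 11) * (2 * exp (- (grid_rate * S / r) * grid_dev_const / 2))"
proof -
  define K where "K = grid_bound r S i j"
  have K: "0 \<le> K" using grid_bound_nonneg r S by (simp add: K_def)
  have "prob (grid_dev_events r S i j)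
      \<le> real (card {k::int. \<bar>real_of_int k\<bar> \<le> K}) * (2 * exp (- (grid_rate * S / r) * grid_dev_const / 2))"
    unfolding grid_dev_events_def K_def
    by (rule prob_UN_le_card_mult[OF finite_int_abs_le]) (use prob_grid_dev_event_le[OF ij _ r mS S] in auto)
  also have "\<dots> \<le> (8 * r / (f q * \<epsilon>) + 11) * (2 * exp (- (grid_rate * S / r) * grid_dev_const / 2))"
    using card_int_abs_le[OF K] grid_bound_le[OF _ mS S, of r] r by (intro mult_right_mono) (auto simp: K_def)
  finally show ?thesis .
qed

lemma prob_bad_event_le:
  assumes ij: "i \<le> j" and r: "1 \<le> r" "r ^ 4 \<le> wlen i j" and mS: "wlen i j \<le> S\<^sup>2" and S: "0 < S"
  shows "prob (bad_event r S i j) \<le> bad_event_bound r S"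
proof -
  have "prob (bad_event r S i j) \<le> prob (centre_dev_event r i j) + prob (upper_dev_event i j)
      + prob (lower_dev_event i j) + prob (grid_dev_events r S i j)"
    unfolding bad_event_def
    by (intro order_trans[OF measure_Un_le] add_mono order_refl) measurable
  also have "\<dots> \<le> bad_event_bound r S"
    using prob_centre_dev_event_le[OF ij r] prob_upper_dev_event_le[OF ij r(2)]
      prob_lower_dev_event_le[OF ij r(2)] prob_grid_dev_events_le[OF ij r(1) mS S]
    by (simp add: bad_event_bound_def)
  finally show ?thesis .
qed

lemma abs_bahadur_stat_le_eps:
  assumes \<omega>: "\<omega> \<in> space M" "\<omega> \<notin> range_exceed_event T n"
    and good: "\<And>i j. (i, j) \<in> confident_windows r n \<Longrightarrow> \<omega> \<notin> bad_event r (sqrt n) i j"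
    and n: "2 \<le> n" and r: "1 \<le> r" and T: "0 \<le> T"
    and quad: "8 * B * r\<^sup>2 \<le> f q ^ 3 * \<epsilon> * sqrt n" and conf: "2 \<le> r * (f q * \<delta>\<^sub>0)"
    and short: "r ^ 4 * (T + (\<bar>q\<bar> + 1 / f q)) \<le> \<epsilon> * sqrt n"
  shows "\<bar>bahadur_stat X \<beta> q (f q) n \<omega>\<bar> \<le> \<epsilon>"
proof (rule abs_bahadur_stat_le[OF n less_imp_le[OF eps_pos]])
  fix i j assume ij: "1 \<le> i" "i < j" "j \<le> n"
  have "wlen i j * \<bar>remainder i j \<omega>\<bar> \<le> \<epsilon> * sqrt n"
  proof (cases "r ^ 4 \<le> wlen i j")
    case True
    hence "(i, j) \<in> confident_windows r n" using ij by (simp add: confident_windows_def)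
    hence "\<omega> \<notin> bad_event r (sqrt n) i j" by (rule good)
    moreover have "2 \<le> r * f q * \<delta>\<^sub>0" using conf by (simp add: mult.assoc)
    ultimately show ?thesis
      using ij n by (intro wlen_mult_abs_remainder_le[OF \<omega>(1) _ _ _ r True quad]) auto
  next
    case False
    have "\<bar>remainder i j \<omega>\<bar> \<le> T + \<bar>q\<bar> + 1 / f q"
      using \<omega> ij by (intro abs_remainder_le_of_range) (fastforce simp: range_exceed_event_def not_le not_less)+
    hence "wlen i j * \<bar>remainder i j \<omega>\<bar> \<le> r ^ 4 * (T + (\<bar>q\<bar> + 1 / f q))"
      using False T f_q_pos wlen_pos[of i j]
      by (intro mult_mono) (auto simp: add.assoc intro: add_nonneg_nonneg)
    thus ?thesis using short by linarith
  qed
  thus "real (j - i + 1) * \<bar>emp_quantile X \<beta> i j \<omega> - q - (\<beta> - emp_cdf X i j \<omega> q) / f q\<bar> \<le> \<epsilon> * sqrt n"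
    by (simp add: wlen_def remainder_def bahadur_term_def)
qed

lemma prob_bahadur_stat_gt_le:
  assumes n: "2 \<le> n" and r: "1 \<le> r" and T: "0 \<le> T"
    and quad: "8 * B * r\<^sup>2 \<le> f q ^ 3 * \<epsilon> * sqrt n" and conf: "2 \<le> r * (f q * \<delta>\<^sub>0)"
    and short: "r ^ 4 * (T + (\<bar>q\<bar> + 1 / f q)) \<le> \<epsilon> * sqrt n"
  shows "prob {\<omega>\<in>space M. \<epsilon> < \<bar>bahadur_stat X \<beta> q (f q) n \<omega>\<bar>}
    \<le> prob (range_exceed_event T n) + real n ^ 2 * bad_event_bound r (sqrt n)"
proof -
  define U where "U = (\<Union>(i, j)\<in>confident_windows r n. bad_event r (sqrt n) i j)"
  have U: "U \<in> events" unfolding U_def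
    using finite_confident_windows by (intro sets.finite_UN) auto
  have "{\<omega>\<in>space M. \<epsilon> < \<bar>bahadur_stat X \<beta> q (f q) n \<omega>\<bar>} \<subseteq> range_exceed_event T n \<union> U"
    using abs_bahadur_stat_le_eps[OF _ _ _ n r T quad conf short] by (force simp: U_def)
  hence "prob {\<omega>\<in>space M. \<epsilon> < \<bar>bahadur_stat X \<beta> q (f q) n \<omega>\<bar>} \<le> prob (range_exceed_event T n \<union> U)"
    using U by (intro finite_measure_mono) auto
  also have "\<dots> \<le> prob (range_exceed_event T n) + prob U"
    using U by (intro measure_Un_le) auto
  also have "prob U \<le> real (card (confident_windows r n)) * bad_event_bound r (sqrt n)"
    unfolding U_def split_beta
  proof (rule prob_UN_le_card_mult[OF finite_confident_windows])
    fix p assume "p \<in> confident_windows r n"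
    hence "1 \<le> fst p" "fst p < snd p" "snd p \<le> n" "r ^ 4 \<le> wlen (fst p) (snd p)"
      by (auto simp: confident_windows_def)
    thus "prob (bad_event r (sqrt n) (fst p) (snd p)) \<le> bad_event_bound r (sqrt n)"
      using n by (intro prob_bad_event_le r) (auto simp: wlen_def)
  qed simp
  also have "\<dots> \<le> real n ^ 2 * bad_event_bound r (sqrt n)"
    using card_confident_windows_le bad_event_bound_nonneg r by (intro mult_right_mono) auto
  finally show ?thesis by simp
qed

end

lemma eventually_window_conditions:
  fixes a b c d e :: real
  assumes "0 < a" "0 < b" "0 < c"
  shows "\<forall>\<^sub>F n in sequentially. 2 \<le> n \<and> 8 * d * (real n powr (1/20))\<^sup>2 \<le> a * sqrt (real n)
    \<and> 2 \<le> real n powr (1/20) * b \<and> (real n powr (1/20)) ^ 4 * (real n powr (5/18) + e) \<le> c * sqrt (real n)"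
proof (intro eventually_conj)
  show "\<forall>\<^sub>F n in sequentially. 8 * d * (real n powr (1/20))\<^sup>2 \<le> a * sqrt (real n)"
    using assms(1) by real_asymp
  show "\<forall>\<^sub>F n in sequentially. 2 \<le> real n powr (1/20) * b"
    using assms(2) by real_asymp
  show "\<forall>\<^sub>F n in sequentially. (real n powr (1/20)) ^ 4 * (real n powr (5/18) + e) \<le> c * sqrt (real n)"
    using assms(3) by real_asymp
qed (rule eventually_ge_at_top)

lemma bad_event_bound_asymptotics:
  fixes a b c d :: real
  assumes "0 < a" "0 < b" "0 < c" "0 < d"
  shows "(\<lambda>n::nat. real n ^ 2 * (2 * exp (- (real n powr (1/20))\<^sup>2 / 4)
     + 2 * exp (- ((real n powr (1/20)) ^ 4 * a / 4))
     + (8 * real n powr (1/20) / b + 11) * (2 * exp (- (c * sqrt (real n) / real n powr (1/20)) * d / 2))))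
     \<longlonglongrightarrow> 0"
  using assms by real_asymp

lemma tail_bound_asymptotics:
  fixes C lam :: real
  assumes lam: "18 / 5 < lam"
  shows "(\<lambda>n::nat. real n * (C * (real n powr (5/18) / 2) powr (- lam) + C * (real n powr (5/18)) powr (- lam)))
    \<longlonglongrightarrow> 0"
proof -
  have lim: "(\<lambda>n::nat. (C * 2 powr lam + C) * real n powr (1 - 5 / 18 * lam)) \<longlonglongrightarrow> 0"
    using lam by (intro tendsto_mult_right_zero tendsto_neg_powr filterlim_real_sequentially) simp
  have eq: "(C * 2 powr lam + C) * real n powr (1 - 5 / 18 * lam)
      = real n * (C * (real n powr (5/18) / 2) powr (- lam) + C * (real n powr (5/18)) powr (- lam))"
    if "1 \<le> n" for n :: nat
  proof -
    have n: "0 < real n" using that by simp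
    have "real n powr (1 - 5 / 18 * lam) = real n powr 1 * real n powr (- (5 / 18 * lam))"
      unfolding powr_add[symmetric] by simp
    hence "real n powr (1 - 5 / 18 * lam) = real n * real n powr (- (5 / 18 * lam))"
      using n by simp
    moreover have "(real n powr (5/18)) powr (- lam) = real n powr (- (5 / 18 * lam))"
      by (simp add: powr_powr)
    moreover have "(real n powr (5/18) / 2) powr (- lam) = 2 powr lam * real n powr (- (5 / 18 * lam))"
      by (simp add: powr_divide powr_powr powr_minus_divide)
    ultimately show ?thesis by (simp add: algebra_simps)
  qed
  show ?thesis
    using lim by (rule Lim_transform_eventually) (use eq in \<open>auto intro: eventually_sequentiallyI[of 1]\<close>)
qed

locale bahadur_tail = bahadur +
  fixes C lam :: real
  assumes tail: "\<And>x. 0 < x \<Longrightarrow> prob {\<omega>\<in>space M. \<bar>X 1 \<omega>\<bar> > x} \<le> C * x powr (- lam)"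
    and lam_gt: "18 / 5 < lam"
begin

lemma prob_gt_eq: "prob {\<omega>\<in>space M. x < X t \<omega>} = 1 - F x"
proof -
  have "{\<omega>\<in>space M. x < X t \<omega>} = space M - {\<omega>\<in>space M. X t \<omega> \<le> x}" by auto
  moreover have "{\<omega>\<in>space M. X t \<omega> \<le> x} \<in> events" by measurable
  ultimately show ?thesis using prob_compl by (simp add: cdf)
qed

lemma upper_tail:
  assumes "0 < x"
  shows "prob {\<omega>\<in>space M. x < X t \<omega>} \<le> C * x powr (- lam)"
proof -
  have "prob {\<omega>\<in>space M. x < X t \<omega>} = prob {\<omega>\<in>space M. x < X 1 \<omega>}" by (simp add: prob_gt_eq)
  also have "\<dots> \<le> prob {\<omega>\<in>space M. \<bar>X 1 \<omega>\<bar> > x}"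
    using assms by (intro finite_measure_mono) auto
  finally show ?thesis using tail[OF assms] by linarith
qed

lemma lower_tail: "0 < x \<Longrightarrow> prob {\<omega>\<in>space M. X t \<omega> \<le> - x} \<le> C * (x / 2) powr (- lam)"
proof -
  assume x: "0 < x"
  have "prob {\<omega>\<in>space M. X t \<omega> \<le> - x} = prob {\<omega>\<in>space M. X 1 \<omega> \<le> - x}" by (simp add: cdf)
  also have "\<dots> \<le> prob {\<omega>\<in>space M. \<bar>X 1 \<omega>\<bar> > x / 2}"
    using x by (intro finite_measure_mono) auto
  finally show ?thesis using tail[of "x / 2"] x by simp
qed

lemma prob_range_exceed_event_le:
  assumes "0 < T"
  shows "prob (range_exceed_event T n) \<le> real n * (C * (T / 2) powr (- lam) + C * T powr (- lam))"
  unfolding range_exceed_event_def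
proof (rule order_trans[OF prob_UN_le_card_mult[of "{1..n}"]])
  fix t
  show "prob ({\<omega>\<in>space M. X t \<omega> \<le> - T} \<union> {\<omega>\<in>space M. T < X t \<omega>})
      \<le> C * (T / 2) powr (- lam) + C * T powr (- lam)"
    using lower_tail[OF assms, of t] upper_tail[OF assms, of t]
    by (intro order_trans[OF measure_Un_le]) (auto simp: add_mono)
qed auto

theorem bahadur_stat_tendsto_0:
  assumes eps: "0 < \<epsilon>"
  shows "(\<lambda>n. prob {\<omega>\<in>space M. \<epsilon> < \<bar>bahadur_stat X \<beta> q (f q) n \<omega>\<bar>}) \<longlonglongrightarrow> 0"
proof -
  interpret bahadur_eps M X F f f' B \<beta> q \<epsilon> by unfold_locales (fact eps)
  define r where "r n = real n powr (1/20)" for n :: nat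
  define T where "T n = real n powr (5/18)" for n :: nat
  define bound where "bound n = real n * (C * (T n / 2) powr (- lam) + C * T n powr (- lam))
      + real n ^ 2 * bad_event_bound (r n) (sqrt n)" for n
  have "\<forall>\<^sub>F n in sequentially. 2 \<le> n \<and> 8 * B * (real n powr (1/20))\<^sup>2 \<le> f q ^ 3 * \<epsilon> * sqrt n
      \<and> 2 \<le> real n powr (1/20) * (f q * \<delta>\<^sub>0)
      \<and> (real n powr (1/20)) ^ 4 * (real n powr (5/18) + (\<bar>q\<bar> + 1 / f q)) \<le> \<epsilon> * sqrt n"
    by (intro eventually_window_conditions) (use f_q_pos \<delta>\<^sub>0_pos eps in simp_all)
  hence ev: "\<forall>\<^sub>F n in sequentially. prob {\<omega>\<in>space M. \<epsilon> < \<bar>bahadur_stat X \<beta> q (f q) n \<omega>\<bar>} \<le> bound n"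
  proof (rule eventually_mono)
    fix n :: nat assume conds: "2 \<le> n \<and> 8 * B * (real n powr (1/20))\<^sup>2 \<le> f q ^ 3 * \<epsilon> * sqrt n
      \<and> 2 \<le> real n powr (1/20) * (f q * \<delta>\<^sub>0)
      \<and> (real n powr (1/20)) ^ 4 * (real n powr (5/18) + (\<bar>q\<bar> + 1 / f q)) \<le> \<epsilon> * sqrt n"
    hence "1 \<le> r n" "0 < T n" by (auto simp: r_def T_def ge_one_powr_ge_zero)
    thus "prob {\<omega>\<in>space M. \<epsilon> < \<bar>bahadur_stat X \<beta> q (f q) n \<omega>\<bar>} \<le> bound n"
      using prob_bahadur_stat_gt_le[of n "r n" "T n"] prob_range_exceed_event_le[of "T n" n] conds
      by (simp add: bound_def r_def T_def)
  qed
  have lim: "bound \<longlonglongrightarrow> 0"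
  proof -
    have "(\<lambda>n. real n ^ 2 * bad_event_bound (r n) (sqrt n)) \<longlonglongrightarrow> 0"
      unfolding bad_event_bound_def r_def
      by (rule bad_event_bound_asymptotics[of "\<rho>\<^sup>2" "f q * \<epsilon>" grid_rate grid_dev_const])
        (use \<rho>_pos f_q_pos eps grid_rate_pos grid_dev_const_pos in auto)
    thus ?thesis
      unfolding bound_def T_def by (rule tendsto_add_zero[OF tail_bound_asymptotics[OF lam_gt]])
  qed
  show ?thesis by (rule tendsto_sandwich[OF _ ev tendsto_const lim]) simp
qed

end

theorem theorem4p4:
  fixes M :: "'a measure" and X :: "nat \<Rightarrow> 'a \<Rightarrow> real"
    and F f f' :: "real \<Rightarrow> real" and C lam \<beta> :: real
  assumes "prob_space M"
    and indep: "prob_space.indep_vars M (\<lambda>_. borel) X UNIV"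
    and cdf: "\<And>t x. measure M {\<omega> \<in> space M. X t \<omega> \<le> x} = F x"
    and F_deriv: "\<And>x. (F has_real_derivative f x) (at x)"
    and f_deriv: "\<And>x. (f has_real_derivative f' x) (at x)"
    and bdd: "\<exists>B. \<forall>x. f x + \<bar>f' x\<bar> \<le> B"
    and C_pos: "C > 0"
    and tail: "\<And>x. x > 0 \<Longrightarrow> measure M {\<omega> \<in> space M. \<bar>X 1 \<omega>\<bar> > x} \<le> C * x powr (-lam)"
    and lam_gt: "lam > 18 / 5"
    and beta: "0 < \<beta>" "\<beta> < 1"
    and fq_pos: "f (gen_inv F \<beta>) > 0"
  shows "\<forall>\<epsilon>>0. ((\<lambda>n. measure M {\<omega> \<in> space M.
            \<bar>bahadur_stat X \<beta> (gen_inv F \<beta>) (f (gen_inv F \<beta>)) n \<omega>\<bar> > \<epsilon>})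
           \<longlonglongrightarrow> 0)"
proof -
  interpret prob_space M by fact
  obtain B where B: "\<And>x. f x + \<bar>f' x\<bar> \<le> B" using bdd by blast
  have rv: "random_variable borel (X 0)" using indep unfolding indep_vars_def by blast
  have cont: "continuous_on UNIV F"
    by (intro continuous_at_imp_continuous_on ballI DERIV_isCont[OF F_deriv])
  have F_q: "F (gen_inv F \<beta>) = \<beta>" by (rule cdf_gen_inv_eq[OF rv cdf cont beta])
  interpret bahadur_tail M X F f f' B \<beta> "gen_inv F \<beta>" C lam
    by unfold_locales (fact indep cdf F_deriv f_deriv B beta F_q fq_pos tail lam_gt)+
  show ?thesis by (intro allI impI bahadur_stat_tendsto_0)
qed

end
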